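(* In the univariate contact-tracing model (described in the context), for every $T\in\mathbb{N}$, every probability distribution $D$ on $\{0,1,2,\dots\}$, every $p_T\in(0,1]$, every $\alpha\ge 0$ and every $\beta>0$, there is an optimal policy that is the index policy defined by an interleaved priority ordering of $\{0,1,\dots,T\}$.
   Context: Univariate model. Fix $T\in\mathbb{N}$, a probability distribution $D$ on $\{0,1,2,\dots\}$, constants $p_T\in(0,1]$, $\alpha\ge 0$, and a discount parameter $\beta>0$. Every node has a recency $h\in\{0,1,\dots,T\}$. Each node (index case or child of an infected node) of recency $h$ is infected independently with probability $p(h)=p_T e^{-\alpha(T-h)}$. If a node of recency $h$ is infected, then for each $j\in\{0,\dots,h-1\}$ it has $Z_j\sim D$ children of recency $j$, all counts independent across $j$ and across nodes and independent of infection statuses. Contact tracing: at step $t=0$ the frontier is a given finite multiset of index cases with known recencies. At each step $t=0,1,2,\dots$ while the frontier is nonempty, the tracer selects one frontier node and queries it, removing it from the frontier. The query reveals its infection status; if it is infected and has recency $h$, benefit $e^{-\beta(h+t)}$ is collected and its children (with their recencies) are added to the frontier; otherwise benefit $0$ is collected and nothing is added. Nodes of the same recency are indistinguishable before being queried, so a policy is a (possibly history-dependent) rule choosing at each step which recency present in the frontier to query. A policy is optimal if for every initial frontier it maximizes the expected total collected benefit over all policies. A priority ordering is a permutation $\sigma=(\sigma_0,\dots,\sigma_T)$ of $\{0,\dots,T\}$; the index policy defined by $\sigma$ always queries a frontier node whose recency appears earliest in $\sigma$. The ordering $\sigma$ is interleaved if for every $0\le j\le T$, $\sigma_j$ is either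 the maximum or the minimum of $\{\sigma_j,\sigma_{j+1},\dots,\sigma_T\}$. *)

theory Defs
  imports "HOL-Probability.Probability"
begin

text \<open>Recencies are natural numbers 0..T. A frontier is a finite multiset of recencies.
  The observation of a query of a node of recency h is None (not infected) or
  Some M, where M is the multiset of recencies of its children.\<close>

type_synonym obs = "nat multiset option"
type_synonym history = "(nat \<times> obs) list"

text \<open>A (deterministic, history-dependent) policy receives the initial frontier,
  the history of queries (queried recency and observation) and the current frontier
  and returns a recency to query.  If the returned recency is not present in the
  current frontier, the smallest recency present is queried instead (so every
  function is an admissible policy and every admissible policy arises this way).\<close>
type_synonym policy = "nat multiset \<Rightarrow> history \<Rightarrow> nat multiset \<Rightarrow> nat"

definition infect_prob :: "nat \<Rightarrow> real \<Rightarrow> real \<Rightarrow> nat \<Rightarrow> real" where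
  "infect_prob T pT \<alpha> h = pT * exp (- \<alpha> * (real T - real h))"

primrec children_pmf :: "nat pmf \<Rightarrow> nat \<Rightarrow> nat multiset pmf" where
  "children_pmf D 0 = return_pmf {#}"
| "children_pmf D (Suc h) =
     bind_pmf (children_pmf D h) (\<lambda>M. map_pmf (\<lambda>z. M + replicate_mset z h) D)"

definition outcome_pmf :: "nat \<Rightarrow> nat pmf \<Rightarrow> real \<Rightarrow> real \<Rightarrow> nat \<Rightarrow> obs pmf" where
  "outcome_pmf T D pT \<alpha> h =
     bind_pmf (bernoulli_pmf (infect_prob T pT \<alpha> h))
       (\<lambda>b. if b then map_pmf Some (children_pmf D h) else return_pmf None)"

definition benefit :: "real \<Rightarrow> nat \<Rightarrow> nat \<Rightarrow> obs \<Rightarrow> ennreal" where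
  "benefit \<beta> h t ob = (case ob of None \<Rightarrow> 0 | Some _ \<Rightarrow> ennreal (exp (- \<beta> * (real h + real t))))"

definition added :: "obs \<Rightarrow> nat multiset" where
  "added ob = (case ob of None \<Rightarrow> {#} | Some M \<Rightarrow> M)"

definition choice :: "policy \<Rightarrow> nat multiset \<Rightarrow> history \<Rightarrow> nat multiset \<Rightarrow> nat" where
  "choice \<pi> F0 hist Fc = (let r = \<pi> F0 hist Fc in if r \<in># Fc then r else Min (set_mset Fc))"

text \<open>Expected benefit collected during the first n steps, starting from a state
  with history hist (the current step is t = length hist) and current frontier Fc.\<close>
primrec val_steps :: "nat \<Rightarrow> nat pmf \<Rightarrow> real \<Rightarrow> real \<Rightarrow> real \<Rightarrow> policy \<Rightarrow> nat
    \<Rightarrow> nat multiset \<Rightarrow> history \<Rightarrow> nat multiset \<Rightarrow> ennreal" where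
  "val_steps T D pT \<alpha> \<beta> \<pi> 0 F0 hist Fc = 0"
| "val_steps T D pT \<alpha> \<beta> \<pi> (Suc n) F0 hist Fc =
     (if Fc = {#} then 0 else
       (let h = choice \<pi> F0 hist Fc in
        \<integral>\<^sup>+ ob. benefit \<beta> h (length hist) ob
              + val_steps T D pT \<alpha> \<beta> \<pi> n F0 (hist @ [(h, ob)]) (Fc - {#h#} + added ob)
          \<partial>measure_pmf (outcome_pmf T D pT \<alpha> h)))"

definition total_value :: "nat \<Rightarrow> nat pmf \<Rightarrow> real \<Rightarrow> real \<Rightarrow> real \<Rightarrow> policy \<Rightarrow> nat multiset \<Rightarrow> ennreal" where
  "total_value T D pT \<alpha> \<beta> \<pi> F0 = (SUP n. val_steps T D pT \<alpha> \<beta> \<pi> n F0 [] F0)"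

definition optimal_policy :: "nat \<Rightarrow> nat pmf \<Rightarrow> real \<Rightarrow> real \<Rightarrow> real \<Rightarrow> policy \<Rightarrow> bool" where
  "optimal_policy T D pT \<alpha> \<beta> \<pi> \<longleftrightarrow>
     (\<forall>F0. set_mset F0 \<subseteq> {..T} \<longrightarrow>
        (\<forall>\<pi>'. total_value T D pT \<alpha> \<beta> \<pi>' F0 \<le> total_value T D pT \<alpha> \<beta> \<pi> F0))"

definition priority_ordering :: "nat \<Rightarrow> nat list \<Rightarrow> bool" where
  "priority_ordering T \<sigma> \<longleftrightarrow> distinct \<sigma> \<and> set \<sigma> = {0..T}"

definition interleaved :: "nat \<Rightarrow> nat list \<Rightarrow> bool" where
  "interleaved T \<sigma> \<longleftrightarrow> (\<forall>j\<le>T. \<sigma> ! j = Max (set (drop j \<sigma>)) \<or> \<sigma> ! j = Min (set (drop j \<sigma>)))"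

definition index_policy :: "nat list \<Rightarrow> policy" where
  "index_policy \<sigma> F0 hist Fc = hd (filter (\<lambda>r. r \<in># Fc) \<sigma>)"

end

theory Submission
  imports Defs
begin

text \<open>Write \<open>d = exp (-\<beta>)\<close> and measure values relative to the current step: querying a node
  of recency \<open>x\<close> then yields the expected reward \<open>R x = p(x) d^x\<close>, and everything that follows is
  discounted by a further factor \<open>d\<close>. Let \<open>W\<close> be the value of the index policy of an ordering
  \<open>\<sigma>\<close>, as a function of the frontier. If \<open>W\<close> is superharmonic, i.e.
  \<open>R h + d E[W(F - h + children of h)] \<le> W F\<close> for every \<open>h\<close> in \<open>F\<close>, then by induction on the
  horizon no policy collects more than \<open>W\<close>, so the index policy is optimal.

  Superharmonicity is an interchange argument. Let \<open>L\<close> consist of the first \<open>k\<close> entries of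
  \<open>\<sigma>\<close> and suppose no recency of \<open>L\<close> is present in \<open>F\<close>. Then the index policy queries
  \<open>t = \<sigma> ! k\<close> and processes the descendants of \<open>t\<close> with recencies in \<open>L\<close> before anything else:
  the excursion of \<open>t\<close>. An excursion of \<open>x\<close> contributes an expected reward \<open>r(x)\<close> and
  multiplies the value of everything after it by an expected discount \<open>q(x)\<close>, and the excursions
  of two nodes commute. Hence exchanging the excursions of \<open>h\<close> and \<open>t\<close> does not decrease the
  value as long as \<open>t\<close> maximises the index \<open>r/(1 - q)\<close> among the recencies outside \<open>L\<close>.

  Such an ordering is built greedily. If the recencies not yet placed form an interval
  \<open>[lo, hi]\<close>, the children of \<open>x \<in> [lo, hi]\<close> with recency \<open>\<ge> lo\<close> are inert during the excursion
  and the others are distributed as the children of a node of recency \<open>lo\<close>. So \<open>r\<close> and \<open>q\<close>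
  depend on \<open>x\<close> only through \<open>p(x) = c e^(\<alpha> x)\<close> and \<open>d^x\<close>, and convexity of the exponential
  shows that the index is maximal at \<open>lo\<close> or at \<open>hi\<close> if \<open>\<alpha> \<le> \<beta>\<close>. If \<open>\<alpha> > \<beta>\<close>, the greedy
  choice always takes \<open>hi\<close>, so \<open>lo = 0\<close>, no children count, and the index \<open>R x/(1 - d)\<close>
  increases with \<open>x\<close>. Placing the better endpoint next yields an interleaved ordering.\<close>

lemma SUP_Suc_incseq:
  fixes f :: "nat \<Rightarrow> 'a::complete_lattice"
  assumes "incseq f" shows "(SUP n. f (Suc n)) = (SUP n. f n)"
  by (intro antisym SUP_mono) (blast intro: incseq_SucD[OF assms])+

lemma nn_integral_pmf_commute:
  fixes A :: "'a pmf" and B :: "'b pmf"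
  shows "(\<integral>\<^sup>+x. \<integral>\<^sup>+y. f x y \<partial>B \<partial>A) = (\<integral>\<^sup>+y. \<integral>\<^sup>+x. f x y \<partial>A \<partial>B)"
  using nn_integral_pair_pmf'[where f="case_prod f" and A=A and B=B]
    nn_integral_pair_pmf'[where f="\<lambda>(y, x). f x y" and A=B and B=A]
  by (simp add: pair_commute_pmf[of A B] case_prod_unfold)

lemma diff_add_swap_mset:
  assumes "x \<in># A" "y \<in># A" "x \<noteq> y"
  shows "A - {#y#} + B - {#x#} + C = A - {#x#} + C - {#y#} + B"
proof -
  have "y \<in># A - {#x#}" using assms by (simp add: in_diff_count)
  then obtain A' where "A - {#x#} = add_mset y A'" by (metis insert_DiffM)
  then have A: "A = add_mset x (add_mset y A')" using assms(1) by (metis insert_DiffM)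
  show ?thesis unfolding A using assms(3) by (simp add: add_mset_commute)
qed

lemma set_snoc_lo:
  "set L = {..<lo} \<union> {hi<..T} \<Longrightarrow> lo \<le> (hi::nat) \<Longrightarrow> set (L @ [lo]) = {..<Suc lo} \<union> {hi<..T}"
  by (intro set_eqI) auto

lemma set_snoc_hi:
  "set L = {..<lo} \<union> {hi<..T} \<Longrightarrow> lo < (hi::nat) \<Longrightarrow> hi \<le> T \<Longrightarrow> set (L @ [hi]) = {..<lo} \<union> {hi - 1<..T}"
  by (intro set_eqI) auto

lemma exp_mult_convex:
  fixes s x y \<theta> :: real
  assumes "0 \<le> \<theta>" "\<theta> \<le> 1"
  shows "exp (s * ((1 - \<theta>) * x + \<theta> * y)) \<le> (1 - \<theta>) * exp (s * x) + \<theta> * exp (s * y)"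
  using convex_onD[OF exp_convex assms, of "s * x" "s * y"] by (simp add: algebra_simps)

lemma exp_combination_le_between:
  fixes c \<alpha> \<beta> \<kappa> e lo hi h :: real
  defines "\<phi> \<equiv> \<lambda>y. c * exp ((\<alpha> - \<beta>) * y) + \<kappa> * exp (\<alpha> * y)"
  assumes "0 < c" "0 \<le> \<alpha>" "\<alpha> \<le> \<beta>" "lo \<le> h" "h \<le> hi" "\<phi> lo \<le> e" "\<phi> hi \<le> e"
  shows "\<phi> h \<le> e"
proof (cases "0 \<le> \<kappa> \<and> lo < hi")
  case True
  define \<theta> where "\<theta> = (h - lo) / (hi - lo)"
  have \<theta>: "0 \<le> \<theta>" "\<theta> \<le> 1" using assms True by (auto simp: \<theta>_def field_simps)
  have "\<theta> * (hi - lo) = h - lo" using True by (simp add: \<theta>_def)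
  then have h: "h = (1 - \<theta>) * lo + \<theta> * hi" by (simp add: algebra_simps)
  have "\<phi> h \<le> c * ((1 - \<theta>) * exp ((\<alpha> - \<beta>) * lo) + \<theta> * exp ((\<alpha> - \<beta>) * hi))
      + \<kappa> * ((1 - \<theta>) * exp (\<alpha> * lo) + \<theta> * exp (\<alpha> * hi))"
    unfolding \<phi>_def h using True \<open>0 < c\<close>
    by (intro add_mono mult_left_mono exp_mult_convex \<theta>(1,2)) auto
  also have "\<dots> = (1 - \<theta>) * \<phi> lo + \<theta> * \<phi> hi"
    by (simp add: \<phi>_def algebra_simps)
  also have "\<dots> \<le> (1 - \<theta>) * e + \<theta> * e"
    using \<theta> assms by (intro add_mono mult_left_mono) auto
  finally show ?thesis by (simp add: algebra_simps)
next
  case False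
  \<comment> \<open>then \<open>\<phi>\<close> is nonincreasing on \<open>[lo, hi]\<close>\<close>
  have "\<phi> h \<le> \<phi> lo"
  proof (cases "h = lo")
    case h_ne: False
    then have "\<kappa> < 0" using False assms by auto
    moreover have "exp ((\<alpha> - \<beta>) * h) \<le> exp ((\<alpha> - \<beta>) * lo)" "exp (\<alpha> * lo) \<le> exp (\<alpha> * h)"
      using assms by (auto intro: mult_left_mono mult_left_mono_neg)
    ultimately show ?thesis
      unfolding \<phi>_def using \<open>0 < c\<close> by (intro add_mono) (auto intro: mult_left_mono_neg)
  qed simp
  then show ?thesis using assms by simp
qed

lemma ratio_le_max_endpoints:
  fixes c \<alpha> \<beta> \<delta> a b lo hi h :: real
  defines "g \<equiv> \<lambda>y. c * exp (\<alpha> * y) * (exp (- \<beta> * y) + \<delta> * a) / (1 - \<delta> + \<delta> * c * exp (\<alpha> * y) * (1 - b))"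
  assumes "0 < c" "0 \<le> \<alpha>" "\<alpha> \<le> \<beta>" "0 < \<delta>" "\<delta> < 1" "b \<le> 1" "lo \<le> h" "h \<le> hi"
  shows "g h \<le> max (g lo) (g hi)"
proof -
  define m where "m = max (g lo) (g hi)"
  define \<kappa> where "\<kappa> = \<delta> * c * (a - m * (1 - b))"
  have g_le_iff: "g y \<le> m \<longleftrightarrow> c * exp ((\<alpha> - \<beta>) * y) + \<kappa> * exp (\<alpha> * y) \<le> m * (1 - \<delta>)" for y
  proof -
    have "0 \<le> \<delta> * c * exp (\<alpha> * y) * (1 - b)" using assms by simp
    then have "0 < 1 - \<delta> + \<delta> * c * exp (\<alpha> * y) * (1 - b)" using assms by linarith
    moreover have "exp (\<alpha> * y) * exp (- \<beta> * y) = exp ((\<alpha> - \<beta>) * y)"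
      by (simp add: exp_add[symmetric] algebra_simps)
    ultimately show ?thesis
      by (simp add: g_def \<kappa>_def pos_divide_le_eq algebra_simps)
  qed
  show ?thesis
    using exp_combination_le_between[of c \<alpha> \<beta> lo h hi \<kappa> "m * (1 - \<delta>)"] g_le_iff[of lo] g_le_iff[of hi] g_le_iff[of h] assms
    by (simp add: m_def)
qed

definition present :: "'a list \<Rightarrow> 'a multiset \<Rightarrow> bool" where
  "present L A \<longleftrightarrow> (\<exists>r\<in>set L. r \<in># A)"

definition first_present :: "'a list \<Rightarrow> 'a multiset \<Rightarrow> 'a" where
  "first_present L A = hd (filter (\<lambda>r. r \<in># A) L)"

lemma first_present_mem:
  assumes "present L A" shows "first_present L A \<in># A" "first_present L A \<in> set L"
proof -
  have ne: "filter (\<lambda>r. r \<in># A) L \<noteq> []" using assms by (auto simp: present_def filter_empty_conv)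
  have "first_present L A \<in> set (filter (\<lambda>r. r \<in># A) L)" unfolding first_present_def using ne by (rule hd_in_set)
  then show "first_present L A \<in># A" "first_present L A \<in> set L" by auto
qed

lemma present_append: "present L A \<Longrightarrow> present (L @ M) A"
  by (auto simp: present_def)

lemma first_present_append: "present L A \<Longrightarrow> first_present (L @ M) A = first_present L A"
  by (auto simp: present_def first_present_def filter_empty_conv)

lemma present_plus_absent: "\<not> present L B \<Longrightarrow> present L (B + A) \<longleftrightarrow> present L A"
  by (auto simp: present_def)

lemma first_present_plus_absent: "\<not> present L B \<Longrightarrow> first_present L (B + A) = first_present L A"
proof -
  assume "\<not> present L B"
  then have "filter (\<lambda>r. r \<in># B + A) L = filter (\<lambda>r. r \<in># A) L"
    by (intro filter_cong) (auto simp: present_def)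
  then show ?thesis by (simp add: first_present_def)
qed

lemma not_present_diff: "\<not> present L F \<Longrightarrow> \<not> present L (F - X)"
  by (auto simp: present_def dest: in_diffD)

lemma first_present_nth:
  assumes "k < length \<sigma>" "\<not> present (take k \<sigma>) F" "\<sigma> ! k \<in># F"
  shows "present \<sigma> F" "first_present \<sigma> F = \<sigma> ! k"
proof -
  have \<sigma>_split: "\<sigma> = take k \<sigma> @ \<sigma> ! k # drop (Suc k) \<sigma>" using assms(1) by (rule id_take_nth_drop)
  have prefix: "filter (\<lambda>r. r \<in># F) (take k \<sigma>) = []" using assms(2) by (auto simp: present_def filter_empty_conv)
  show "present \<sigma> F" using assms(1,3) by (auto simp: present_def)
  show "first_present \<sigma> F = \<sigma> ! k" unfolding first_present_def
    by (subst \<sigma>_split) (simp add: prefix assms(3))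
qed

lemma present_iff_nonempty:
  assumes "set_mset A \<subseteq> set L" shows "present L A \<longleftrightarrow> A \<noteq> {#}"
proof
  assume "A \<noteq> {#}"
  then obtain a where "a \<in># A" by (metis multiset_nonemptyE)
  with assms show "present L A" by (auto simp: present_def)
qed (auto simp: present_def)

lemma set_children_pmf: "M \<in> set_pmf (children_pmf D h) \<Longrightarrow> set_mset M \<subseteq> {..<h}"
proof (induction h arbitrary: M)
  case 0 then show ?case by simp
next
  case (Suc h)
  then obtain M0 z where "M0 \<in> set_pmf (children_pmf D h)" "M = M0 + replicate_mset z h"
    by auto
  with Suc.IH[of M0] show ?case by (auto split: if_splits)
qed

lemma set_added_outcome:
  "ob \<in> set_pmf (outcome_pmf T D pT \<alpha> x) \<Longrightarrow> set_mset (added ob) \<subseteq> {..<x}"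
  by (auto simp: outcome_pmf_def added_def dest!: set_children_pmf split: if_splits)

lemma nn_integral_outcome_pmf:
  assumes "0 \<le> infect_prob T pT \<alpha> x" "infect_prob T pT \<alpha> x \<le> 1"
  shows "(\<integral>\<^sup>+ob. f ob \<partial>outcome_pmf T D pT \<alpha> x) =
     ennreal (infect_prob T pT \<alpha> x) * (\<integral>\<^sup>+M. f (Some M) \<partial>children_pmf D x)
     + ennreal (1 - infect_prob T pT \<alpha> x) * f None"
  using assms by (simp add: outcome_pmf_def mult.commute)

lemma children_pmf_filter_below:
  assumes "lo \<le> x"
  shows "map_pmf (filter_mset (\<lambda>y. y < lo)) (children_pmf D x) = children_pmf D lo"
  using assms
proof (induction x)
  case 0 then show ?case by simp
next
  case (Suc x)
  show ?case
  proof (cases "lo = Suc x")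
    case True
    show ?thesis unfolding True
    proof (rule map_pmf_idI)
      fix M assume "M \<in> set_pmf (children_pmf D (Suc x))"
      then have "set_mset M \<subseteq> {..<Suc x}" by (rule set_children_pmf)
      then have "filter_mset (\<lambda>y. y < Suc x) M = filter_mset (\<lambda>_. True) M" by (intro filter_mset_cong0) auto
      then show "filter_mset (\<lambda>y. y < Suc x) M = M" by simp
    qed
  next
    case False
    then have lx: "lo \<le> x" using Suc.prems by simp
    have "map_pmf (filter_mset (\<lambda>y. y < lo)) (children_pmf D (Suc x))
        = bind_pmf (children_pmf D x) (\<lambda>M. return_pmf (filter_mset (\<lambda>y. y < lo) M))"
    proof -
      have rep: "filter_mset (\<lambda>y. y < lo) (replicate_mset n x) = {#}" for n
        using lx by (simp add: in_replicate_mset)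
      show ?thesis by (simp add: map_bind_pmf pmf.map_comp o_def rep)
    qed
    also have "\<dots> = map_pmf (filter_mset (\<lambda>y. y < lo)) (children_pmf D x)"
      by (simp add: map_pmf_def)
    finally show ?thesis using Suc.IH lx by simp
  qed
qed


locale contact_tracing =
  fixes T :: nat and D :: "nat pmf" and pT \<alpha> \<beta> :: real
  assumes pT_pos: "0 < pT" and pT_le_1: "pT \<le> 1" and alpha_nonneg: "0 \<le> \<alpha>" and beta_pos: "0 < \<beta>"
begin

definition disc :: real where "disc = exp (- \<beta>)"
definition pinf :: "nat \<Rightarrow> real" where "pinf x = infect_prob T pT \<alpha> x"
definition reward :: "nat \<Rightarrow> real" where "reward x = pinf x * disc ^ x"
abbreviation out :: "nat \<Rightarrow> obs pmf" where "out x \<equiv> outcome_pmf T D pT \<alpha> x"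

lemma disc_pos: "0 < disc" and disc_less_1: "disc < 1"
  using beta_pos by (auto simp: disc_def)

lemma pinf_pos: "0 < pinf x"
  using pT_pos by (simp add: pinf_def infect_prob_def)

lemma pinf_le_1: "x \<le> T \<Longrightarrow> pinf x \<le> 1"
proof -
  assume "x \<le> T"
  then have "- \<alpha> * (real T - real x) \<le> 0" using alpha_nonneg by (simp add: mult_nonneg_nonneg)
  then have "exp (- \<alpha> * (real T - real x)) \<le> 1" by simp
  then show ?thesis using pT_le_1 pT_pos unfolding pinf_def infect_prob_def
    by (meson mult_le_one less_imp_le exp_ge_zero)
qed

lemma reward_nonneg: "0 \<le> reward x"
  using pinf_pos[of x] disc_pos by (simp add: reward_def)

lemma reward_le_1: "x \<le> T \<Longrightarrow> reward x \<le> 1"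
  using pinf_le_1[of x] pinf_pos disc_pos disc_less_1
  by (simp add: reward_def mult_le_one power_le_one)

lemma disc_power: "disc ^ k = exp (- \<beta> * real k)"
  unfolding disc_def by (simp add: exp_of_nat_mult[symmetric] mult.commute)

section \<open>Index runs restricted to a list of recencies\<close>

text \<open>\<open>run L c f A\<close>: starting from frontier \<open>A\<close>, follow the index policy of \<open>L\<close> as long as a
  recency of \<open>L\<close> is present, collecting \<open>c\<close> times the reward of each query, and then collect
  the terminal value \<open>f\<close> of the remaining frontier. \<open>run_steps\<close> truncates after \<open>n\<close> steps.\<close>
primrec run_steps :: "nat list \<Rightarrow> real \<Rightarrow> (nat multiset \<Rightarrow> ennreal) \<Rightarrow> nat \<Rightarrow> nat multiset \<Rightarrow> ennreal" where
  "run_steps L c f 0 A = 0"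
| "run_steps L c f (Suc n) A = (if present L A then
      ennreal (c * reward (first_present L A)) + ennreal disc *
        (\<integral>\<^sup>+ob. run_steps L c f n (A - {#first_present L A#} + added ob) \<partial>out (first_present L A))
    else f A)"

definition run :: "nat list \<Rightarrow> real \<Rightarrow> (nat multiset \<Rightarrow> ennreal) \<Rightarrow> nat multiset \<Rightarrow> ennreal" where
  "run L c f A = (SUP n. run_steps L c f n A)"

lemma run_steps_Suc_mono: "run_steps L c f n A \<le> run_steps L c f (Suc n) A"
proof (induction n arbitrary: A)
  case 0 then show ?case by simp
next
  case (Suc n)
  show ?case
    unfolding run_steps.simps(2)[of L c f "Suc n" A] run_steps.simps(2)[of L c f n A]
    by (auto intro!: add_left_mono mult_left_mono nn_integral_mono Suc simp del: run_steps.simps)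
qed

lemma run_steps_incseq: "incseq (\<lambda>n. run_steps L c f n A)"
  by (rule incseq_SucI) (rule run_steps_Suc_mono)

lemma run_steps_incseq_fun: "incseq (\<lambda>n x. run_steps L c f n (g x))"
  using run_steps_incseq by (auto simp: incseq_def le_fun_def)

lemma run_steps_le_run: "run_steps L c f n A \<le> run L c f A"
  unfolding run_def by (rule SUP_upper) simp

lemma run_eq_SUP_Suc: "run L c f A = (SUP n. run_steps L c f (Suc n) A)"
  unfolding run_def by (rule SUP_Suc_incseq[symmetric]) (rule run_steps_incseq)

lemma run_present:
  assumes "present L A"
  shows "run L c f A = ennreal (c * reward (first_present L A)) + ennreal disc *
        (\<integral>\<^sup>+ob. run L c f (A - {#first_present L A#} + added ob) \<partial>out (first_present L A))"
proof -
  let ?x = "first_present L A"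
  have "run L c f A = (SUP n. ennreal (c * reward ?x) + ennreal disc *
        (\<integral>\<^sup>+ob. run_steps L c f n (A - {#?x#} + added ob) \<partial>out ?x))"
    unfolding run_eq_SUP_Suc using assms by simp
  also have "\<dots> = ennreal (c * reward ?x) + (SUP n. ennreal disc *
        (\<integral>\<^sup>+ob. run_steps L c f n (A - {#?x#} + added ob) \<partial>out ?x))"
    by (rule ennreal_SUP_add_right[symmetric]) simp
  also have "\<dots> = ennreal (c * reward ?x) + ennreal disc * (SUP n.
        (\<integral>\<^sup>+ob. run_steps L c f n (A - {#?x#} + added ob) \<partial>out ?x))"
    by (simp add: SUP_mult_left_ennreal)
  also have "(SUP n. (\<integral>\<^sup>+ob. run_steps L c f n (A - {#?x#} + added ob) \<partial>out ?x))
      = (\<integral>\<^sup>+ob. (SUP n. run_steps L c f n (A - {#?x#} + added ob)) \<partial>out ?x)"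
    by (rule nn_integral_monotone_convergence_SUP[symmetric])
       (auto intro: run_steps_incseq_fun[of L c f "\<lambda>ob. A - {#?x#} + added ob"])
  finally show ?thesis by (simp add: run_def)
qed

lemma run_absent: "\<not> present L A \<Longrightarrow> run L c f A = f A"
  unfolding run_eq_SUP_Suc by simp

lemma run_steps_add:
  assumes "0 \<le> c" "0 \<le> c'"
  shows "run_steps L c f n A + run_steps L c' g n A = run_steps L (c + c') (\<lambda>C. f C + g C) n A"
proof (induction n arbitrary: A)
  case 0 then show ?case by simp
next
  case (Suc n)
  show ?case
  proof (cases "present L A")
    case True
    let ?x = "first_present L A"
    have reward_add: "ennreal (c * reward ?x) + ennreal (c' * reward ?x) = ennreal ((c + c') * reward ?x)"
      using assms reward_nonneg by (simp add: ennreal_plus[symmetric] distrib_right del: ennreal_plus)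
    have integral_add: "(\<integral>\<^sup>+ob. run_steps L c f n (A - {#?x#} + added ob) \<partial>out ?x) + (\<integral>\<^sup>+ob. run_steps L c' g n (A - {#?x#} + added ob) \<partial>out ?x)
       = (\<integral>\<^sup>+ob. run_steps L (c + c') (\<lambda>C. f C + g C) n (A - {#?x#} + added ob) \<partial>out ?x)"
      by (subst nn_integral_add[symmetric]) (auto simp: Suc)
    show ?thesis using True reward_add integral_add[symmetric]
      by (simp add: distrib_left algebra_simps)
  qed simp
qed

lemma run_add:
  assumes "0 \<le> c" "0 \<le> c'"
  shows "run L c f A + run L c' g A = run L (c + c') (\<lambda>C. f C + g C) A"
  unfolding run_def
  by (subst ennreal_SUP_add[symmetric]) (auto intro: run_steps_incseq simp: run_steps_add[OF assms])

lemma run_steps_scale: "run_steps L 0 (\<lambda>C. a * f C) n A = a * run_steps L 0 f n A"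
proof (induction n arbitrary: A)
  case 0 then show ?case by simp
next
  case (Suc n) then show ?case
    by (simp add: nn_integral_cmult algebra_simps)
qed

lemma run_scale: "run L 0 (\<lambda>C. a * f C) A = a * run L 0 f A"
  unfolding run_def by (simp add: run_steps_scale SUP_mult_left_ennreal)

lemma run_steps_nn_integral:
  fixes \<mu> :: "'b pmf"
  shows "run_steps L 0 (\<lambda>C. \<integral>\<^sup>+y. \<phi> C y \<partial>\<mu>) n A = (\<integral>\<^sup>+y. run_steps L 0 (\<lambda>C. \<phi> C y) n A \<partial>\<mu>)"
proof (induction n arbitrary: A)
  case 0 then show ?case by simp
next
  case (Suc n)
  show ?case
  proof (cases "present L A")
    case True
    let ?x = "first_present L A"
    have "run_steps L 0 (\<lambda>C. \<integral>\<^sup>+y. \<phi> C y \<partial>\<mu>) (Suc n) A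
        = ennreal disc * (\<integral>\<^sup>+ob. \<integral>\<^sup>+y. run_steps L 0 (\<lambda>C. \<phi> C y) n (A - {#?x#} + added ob) \<partial>\<mu> \<partial>out ?x)"
      using True by (simp add: Suc)
    also have "\<dots> = ennreal disc * (\<integral>\<^sup>+y. \<integral>\<^sup>+ob. run_steps L 0 (\<lambda>C. \<phi> C y) n (A - {#?x#} + added ob) \<partial>out ?x \<partial>\<mu>)"
      by (subst nn_integral_pmf_commute) rule
    also have "\<dots> = (\<integral>\<^sup>+y. run_steps L 0 (\<lambda>C. \<phi> C y) (Suc n) A \<partial>\<mu>)"
      using True by (simp add: nn_integral_cmult)
    finally show ?thesis .
  qed simp
qed

lemma run_nn_integral:
  fixes \<mu> :: "'b pmf"
  shows "run L 0 (\<lambda>C. \<integral>\<^sup>+y. \<phi> C y \<partial>\<mu>) A = (\<integral>\<^sup>+y. run L 0 (\<lambda>C. \<phi> C y) A \<partial>\<mu>)"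
  unfolding run_def run_steps_nn_integral
  by (rule nn_integral_monotone_convergence_SUP[symmetric])
     (auto simp: incseq_def le_fun_def intro: incseq_SucI run_steps_incseq[unfolded incseq_def, rule_format])

lemma run_steps_plus_absent:
  assumes "\<not> present L B"
  shows "run_steps L c f n (B + A) = run_steps L c (\<lambda>C. f (B + C)) n A"
proof (induction n arbitrary: A)
  case 0 then show ?case by simp
next
  case (Suc n)
  show ?case
  proof (cases "present L A")
    case True
    let ?x = "first_present L A"
    have x: "?x \<in># A" using first_present_mem[OF True] by simp
    have eq: "B + A - {#?x#} + added ob = B + (A - {#?x#} + added ob)" for ob
      using diff_union_single_conv[OF x, of B] by (simp only: add.assoc)
    have present_BA: "present L (B + A)" using True assms present_plus_absent by blast
    have first_BA: "first_present L (B + A) = ?x" using assms first_present_plus_absent by blast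
    show ?thesis unfolding run_steps.simps(2)[of L c f n "B + A"] run_steps.simps(2)[of L c "\<lambda>C. f (B + C)" n A]
      using True present_BA first_BA by (simp only: if_True eq Suc)
  qed (simp add: present_plus_absent assms)
qed

lemma run_plus_absent:
  "\<not> present L B \<Longrightarrow> run L c f (B + A) = run L c (\<lambda>C. f (B + C)) A"
  unfolding run_def by (simp add: run_steps_plus_absent)

lemma run_steps_append_le:
  "run_steps (L @ M) c f n A \<le> run L c (\<lambda>C. run (L @ M) c f C) A"
proof (induction n arbitrary: A)
  case 0 then show ?case by simp
next
  case (Suc n)
  show ?case
  proof (cases "present L A")
    case True
    then show ?thesis
      by (simp add: run_present present_append first_present_append)
         (intro add_left_mono mult_left_mono nn_integral_mono Suc, simp)
  next
    case False
    then have "run L c (\<lambda>C. run (L @ M) c f C) A = run (L @ M) c f A" by (simp add: run_absent)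
    with run_steps_le_run show ?thesis by metis
  qed
qed

lemma run_steps_append_ge:
  "run_steps L c (\<lambda>C. run (L @ M) c f C) n A \<le> run (L @ M) c f A"
proof (induction n arbitrary: A)
  case 0 then show ?case by simp
next
  case (Suc n)
  show ?case
  proof (cases "present L A")
    case True
    then show ?thesis
      by (simp add: run_present[of "L @ M"] present_append first_present_append)
         (intro add_left_mono mult_left_mono nn_integral_mono Suc, simp)
  qed simp
qed

lemma run_append: "run (L @ M) c f A = run L c (\<lambda>C. run (L @ M) c f C) A"
proof (rule antisym)
  show "run (L @ M) c f A \<le> run L c (\<lambda>C. run (L @ M) c f C) A"
    unfolding run_def[of "L @ M" c f A] by (rule SUP_least) (rule run_steps_append_le)
  show "run L c (\<lambda>C. run (L @ M) c f C) A \<le> run (L @ M) c f A"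
    unfolding run_def[of L c _ A] by (rule SUP_least) (rule run_steps_append_ge)
qed

lemma run_steps_query_any:
  assumes "x \<in># A" "x \<in> set L"
  shows "run_steps L 0 f (Suc n) A = ennreal disc * (\<integral>\<^sup>+ob. run_steps L 0 f n (A - {#x#} + added ob) \<partial>out x)"
  using assms
proof (induction n arbitrary: A x)
  case 0
  then have "present L A" by (auto simp: present_def)
  then show ?case by simp
next
  case (Suc m)
  have inA: "present L A" using Suc.prems by (auto simp: present_def)
  let ?y = "first_present L A"
  have y: "?y \<in># A" "?y \<in> set L" using first_present_mem[OF inA] by auto
  show ?case
  proof (cases "x = ?y")
    case True then show ?thesis using inA by simp
  next
    case False
    have "run_steps L 0 f (Suc (Suc m)) A = ennreal disc * (\<integral>\<^sup>+ob. run_steps L 0 f (Suc m) (A - {#?y#} + added ob) \<partial>out ?y)"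
      using inA by simp
    also have "\<dots> = ennreal disc * (\<integral>\<^sup>+ob. ennreal disc * (\<integral>\<^sup>+ob'. run_steps L 0 f m (A - {#?y#} + added ob - {#x#} + added ob') \<partial>out x) \<partial>out ?y)"
    proof -
      have "x \<in># A - {#?y#} + added ob" for ob using Suc.prems False by (simp add: in_diff_count)
      then have "run_steps L 0 f (Suc m) (A - {#?y#} + added ob) = ennreal disc * (\<integral>\<^sup>+ob'. run_steps L 0 f m (A - {#?y#} + added ob - {#x#} + added ob') \<partial>out x)" for ob
        using Suc.IH Suc.prems by blast
      then show ?thesis by (simp only:)
    qed
    \<comment> \<open>the outcomes of the queries of \<open>?y\<close> and \<open>x\<close> are independent, so their order is irrelevant\<close>
    also have "\<dots> = ennreal disc * (\<integral>\<^sup>+ob'. ennreal disc * (\<integral>\<^sup>+ob. run_steps L 0 f m (A - {#x#} + added ob' - {#?y#} + added ob) \<partial>out ?y) \<partial>out x)"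
      by (simp add: nn_integral_cmult diff_add_swap_mset[OF Suc.prems(1) y(1) False] nn_integral_pmf_commute[of "out ?y"])
    also have "\<dots> = ennreal disc * (\<integral>\<^sup>+ob'. run_steps L 0 f (Suc m) (A - {#x#} + added ob') \<partial>out x)"
    proof -
      have "?y \<in># A - {#x#} + added ob'" for ob' using y False by (simp add: in_diff_count)
      then have "run_steps L 0 f (Suc m) (A - {#x#} + added ob') = ennreal disc * (\<integral>\<^sup>+ob. run_steps L 0 f m (A - {#x#} + added ob' - {#?y#} + added ob) \<partial>out ?y)" for ob'
        using Suc.IH y by blast
      then show ?thesis by (simp only:)
    qed
    finally show ?thesis .
  qed
qed

lemma run_query_any:
  assumes "x \<in># A" "x \<in> set L"
  shows "run L 0 f A = ennreal disc * (\<integral>\<^sup>+ob. run L 0 f (A - {#x#} + added ob) \<partial>out x)"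
proof -
  have "run L 0 f A = (SUP n. ennreal disc * (\<integral>\<^sup>+ob. run_steps L 0 f n (A - {#x#} + added ob) \<partial>out x))"
    unfolding run_eq_SUP_Suc using run_steps_query_any[OF assms] by simp
  also have "\<dots> = ennreal disc * (SUP n. (\<integral>\<^sup>+ob. run_steps L 0 f n (A - {#x#} + added ob) \<partial>out x))"
    by (simp add: SUP_mult_left_ennreal)
  also have "(SUP n. (\<integral>\<^sup>+ob. run_steps L 0 f n (A - {#x#} + added ob) \<partial>out x))
      = (\<integral>\<^sup>+ob. (SUP n. run_steps L 0 f n (A - {#x#} + added ob)) \<partial>out x)"
    by (rule nn_integral_monotone_convergence_SUP[symmetric])
       (auto intro: run_steps_incseq_fun[of L 0 f "\<lambda>ob. A - {#x#} + added ob"])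
  finally show ?thesis by (simp add: run_def)
qed

lemma run_steps_plus_le: "run_steps L 0 (\<lambda>C. run L 0 f (C + B)) n A \<le> run L 0 f (A + B)"
proof (induction n arbitrary: A)
  case 0 then show ?case by simp
next
  case (Suc n)
  show ?case
  proof (cases "present L A")
    case True
    let ?x = "first_present L A"
    have x: "?x \<in># A" "?x \<in> set L" using first_present_mem[OF True] by auto
    have eq: "A - {#?x#} + added ob + B = A + B - {#?x#} + added ob" for ob
      using x by (simp add: multiset_eq_iff in_diff_count)
    have "run_steps L 0 (\<lambda>C. run L 0 f (C + B)) (Suc n) A
        \<le> ennreal disc * (\<integral>\<^sup>+ob. run L 0 f (A - {#?x#} + added ob + B) \<partial>out ?x)"
      using True by (simp del: run_steps.simps(1)) (intro mult_left_mono nn_integral_mono Suc, simp)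
    also have "\<dots> = run L 0 f (A + B)"
    proof -
      have m: "?x \<in># A + B" using x by simp
      show ?thesis unfolding eq using run_query_any[OF m x(2), of f] by (rule sym)
    qed
    finally show ?thesis .
  qed simp
qed

lemma run_steps_plus_ge: "run_steps L 0 f n (A + B) \<le> run L 0 (\<lambda>C. run L 0 f (C + B)) A"
proof (induction n arbitrary: A)
  case 0 then show ?case by simp
next
  case (Suc n)
  show ?case
  proof (cases "present L A")
    case True
    let ?x = "first_present L A"
    have x: "?x \<in># A" "?x \<in> set L" using first_present_mem[OF True] by auto
    have eq: "A + B - {#?x#} + added ob = A - {#?x#} + added ob + B" for ob
      using x by (simp add: multiset_eq_iff in_diff_count)
    have "run_steps L 0 f (Suc n) (A + B) = ennreal disc * (\<integral>\<^sup>+ob. run_steps L 0 f n (A - {#?x#} + added ob + B) \<partial>out ?x)"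
      using run_steps_query_any[of ?x "A + B" L f n] x by (simp add: eq)
    also have "\<dots> \<le> ennreal disc * (\<integral>\<^sup>+ob. run L 0 (\<lambda>C. run L 0 f (C + B)) (A - {#?x#} + added ob) \<partial>out ?x)"
      by (intro mult_left_mono nn_integral_mono Suc) simp
    also have "\<dots> = run L 0 (\<lambda>C. run L 0 f (C + B)) A"
      using run_present[OF True, of 0] by simp
    finally show ?thesis .
  next
    case False
    then have "run L 0 (\<lambda>C. run L 0 f (C + B)) A = run L 0 f (A + B)" by (simp add: run_absent)
    with run_steps_le_run show ?thesis by metis
  qed
qed

lemma run_plus: "run L 0 f (A + B) = run L 0 (\<lambda>C. run L 0 f (C + B)) A"
proof (rule antisym)
  show "run L 0 f (A + B) \<le> run L 0 (\<lambda>C. run L 0 f (C + B)) A"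
    unfolding run_def[of L 0 f "A + B"] by (rule SUP_least) (rule run_steps_plus_ge)
  show "run L 0 (\<lambda>C. run L 0 f (C + B)) A \<le> run L 0 f (A + B)"
    unfolding run_def[of L 0 _ A] by (rule SUP_least) (rule run_steps_plus_le)
qed

lemma set_mset_after_query:
  assumes "set_mset A \<subseteq> {..<m}" "x \<in># A" "ob \<in> set_pmf (out x)"
  shows "set_mset (A - {#x#} + added ob) \<subseteq> {..<m}"
proof -
  have "x < m" using assms by auto
  have "set_mset (A - {#x#} + added ob) \<subseteq> set_mset A \<union> set_mset (added ob)" by (auto dest: in_diffD)
  then show ?thesis using assms set_added_outcome[OF assms(3)] \<open>x < m\<close> by (force simp: subset_iff)
qed

lemma run_steps_mono_below:
  assumes "\<And>C. \<not> present L C \<Longrightarrow> set_mset C \<subseteq> {..<m} \<Longrightarrow> f C \<le> g C"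
  shows "set_mset A \<subseteq> {..<m} \<Longrightarrow> run_steps L c f n A \<le> run_steps L c g n A"
proof (induction n arbitrary: A)
  case 0 then show ?case by simp
next
  case (Suc n)
  show ?case
  proof (cases "present L A")
    case True
    let ?x = "first_present L A"
    have x: "?x \<in># A" using first_present_mem[OF True] by auto
    show ?thesis using True
      by (simp del: run_steps.simps(1))
         (intro add_left_mono mult_left_mono nn_integral_mono_AE AE_pmfI Suc.IH set_mset_after_query[OF Suc.prems x], auto)
  next
    case False then show ?thesis using assms Suc.prems by simp
  qed
qed

lemma run_mono_below:
  assumes "\<And>C. \<not> present L C \<Longrightarrow> set_mset C \<subseteq> {..<m} \<Longrightarrow> f C \<le> g C" "set_mset A \<subseteq> {..<m}"
  shows "run L c f A \<le> run L c g A"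
  unfolding run_def
proof (rule SUP_mono)
  fix n show "\<exists>m'\<in>UNIV. run_steps L c f n A \<le> run_steps L c g m' A"
    using run_steps_mono_below[of L m f g A c n] assms by blast
qed

lemma run_cong:
  assumes "\<And>C. \<not> present L C \<Longrightarrow> f C = g C"
  shows "run L c f A = run L c g A"
proof -
  have "run_steps L c f n A = run_steps L c g n A" for n
    by (induction n arbitrary: A) (auto simp: assms)
  then show ?thesis by (simp add: run_def)
qed

lemma run_steps_le_const:
  assumes "\<And>C. f C \<le> ennreal b" "0 \<le> b"
  shows "run_steps L 0 f n A \<le> ennreal b"
proof (induction n arbitrary: A)
  case 0 then show ?case by simp
next
  case (Suc n)
  show ?case
  proof (cases "present L A")
    case True
    let ?x = "first_present L A"
    have "(\<integral>\<^sup>+ob. run_steps L 0 f n (A - {#?x#} + added ob) \<partial>out ?x) \<le> (\<integral>\<^sup>+ob. ennreal b \<partial>out ?x)"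
      by (intro nn_integral_mono Suc)
    also have "\<dots> = ennreal b" by simp
    finally have "ennreal disc * (\<integral>\<^sup>+ob. run_steps L 0 f n (A - {#?x#} + added ob) \<partial>out ?x) \<le> ennreal disc * ennreal b"
      by (rule mult_left_mono) simp
    also have "\<dots> \<le> ennreal b" using disc_less_1 disc_pos assms(2)
      by (simp add: ennreal_mult[symmetric] del: ennreal_mult) (metis mult_left_le_one_le less_imp_le)
    finally show ?thesis using True by simp
  qed (simp add: assms)
qed

lemma run_le_const:
  assumes "\<And>C. f C \<le> ennreal b" "0 \<le> b"
  shows "run L 0 f A \<le> ennreal b"
  unfolding run_def by (rule SUP_least) (rule run_steps_le_const[OF assms])

lemma run_steps_le_geometric:
  assumes "set L \<subseteq> {..T}"
  shows "run_steps L 1 (\<lambda>_. 0) n A \<le> ennreal (1 / (1 - disc))"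
proof (induction n arbitrary: A)
  case 0 then show ?case by simp
next
  case (Suc n)
  show ?case
  proof (cases "present L A")
    case True
    let ?x = "first_present L A"
    have xT: "?x \<le> T" using first_present_mem(2)[OF True] assms by auto
    have "(\<integral>\<^sup>+ob. run_steps L 1 (\<lambda>_. 0) n (A - {#?x#} + added ob) \<partial>out ?x) \<le> (\<integral>\<^sup>+ob. ennreal (1 / (1 - disc)) \<partial>out ?x)"
      by (intro nn_integral_mono Suc)
    also have "\<dots> = ennreal (1 / (1 - disc))" by simp
    finally have "ennreal disc * (\<integral>\<^sup>+ob. run_steps L 1 (\<lambda>_. 0) n (A - {#?x#} + added ob) \<partial>out ?x) \<le> ennreal disc * ennreal (1 / (1 - disc))"
      by (rule mult_left_mono) simp
    then have "ennreal (1 * reward ?x) + ennreal disc * (\<integral>\<^sup>+ob. run_steps L 1 (\<lambda>_. 0) n (A - {#?x#} + added ob) \<partial>out ?x)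
        \<le> ennreal 1 + ennreal disc * ennreal (1 / (1 - disc))"
      using reward_le_1[OF xT] by (intro add_mono) auto
    also have "\<dots> = ennreal (1 + disc * (1 / (1 - disc)))"
    proof -
      have "ennreal disc * ennreal (1 / (1 - disc)) = ennreal (disc * (1 / (1 - disc)))"
        using disc_pos disc_less_1 by (intro ennreal_mult[symmetric]) auto
      moreover have "ennreal 1 + ennreal (disc * (1 / (1 - disc))) = ennreal (1 + disc * (1 / (1 - disc)))"
        using disc_pos disc_less_1 by (intro ennreal_plus[symmetric]) auto
      ultimately show ?thesis by simp
    qed
    also have "1 + disc * (1 / (1 - disc)) = 1 / (1 - disc)" using disc_less_1 by (simp add: field_simps)
    finally show ?thesis using True by simp
  qed simp
qed

lemma run_le_geometric:
  assumes "set L \<subseteq> {..T}"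
  shows "run L 1 (\<lambda>_. 0) A \<le> ennreal (1 / (1 - disc))"
  unfolding run_def by (rule SUP_least) (rule run_steps_le_geometric[OF assms])

section \<open>Superharmonic functions dominate every policy\<close>

abbreviation index_value :: "nat list \<Rightarrow> nat multiset \<Rightarrow> ennreal" where
  "index_value \<sigma> \<equiv> run \<sigma> 1 (\<lambda>_. 0)"

lemma nn_integral_benefit:
  assumes "h \<le> T"
  shows "(\<integral>\<^sup>+ob. benefit \<beta> h t ob \<partial>out h) = ennreal (disc ^ t) * ennreal (reward h)"
proof -
  have p: "0 \<le> infect_prob T pT \<alpha> h" "infect_prob T pT \<alpha> h \<le> 1"
    using pinf_pos[of h] pinf_le_1[OF assms] by (auto simp: pinf_def)
  have "(\<integral>\<^sup>+ob. benefit \<beta> h t ob \<partial>out h) = ennreal (pinf h) * ennreal (exp (- \<beta> * (real h + real t)))"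
    by (subst nn_integral_outcome_pmf[OF p]) (simp add: benefit_def pinf_def)
  also have "\<dots> = ennreal (disc ^ t * reward h)"
  proof -
    have "exp (- \<beta> * (real h + real t)) = disc ^ h * disc ^ t" by (simp add: disc_power distrib_left exp_add[symmetric] algebra_simps)
    then show ?thesis using pinf_pos[of h] disc_pos by (simp add: reward_def ennreal_mult[symmetric] algebra_simps)
  qed
  finally show ?thesis using disc_pos reward_nonneg[of h] by (simp add: ennreal_mult)
qed

lemma choice_mem:
  assumes "Fc \<noteq> {#}" shows "choice \<pi> F0 hist Fc \<in># Fc"
proof -
  have "Min (set_mset Fc) \<in> set_mset Fc" using assms by (intro Min_in) auto
  then show ?thesis by (auto simp: choice_def Let_def)
qed

lemma val_steps_index_policy:
  assumes sig: "set \<sigma> = {0..T}"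
  shows "set_mset Fc \<subseteq> {..T} \<Longrightarrow>
    val_steps T D pT \<alpha> \<beta> (index_policy \<sigma>) n F0 hist Fc = ennreal (disc ^ length hist) * run_steps \<sigma> 1 (\<lambda>_. 0) n Fc"
proof (induction n arbitrary: hist Fc)
  case 0 then show ?case by simp
next
  case (Suc n)
  show ?case
  proof (cases "Fc = {#}")
    case True then show ?thesis using sig by (simp add: present_def)
  next
    case False
    have inl: "present \<sigma> Fc" using present_iff_nonempty[of Fc \<sigma>] sig Suc.prems False by (auto simp: atLeast0AtMost)
    let ?h = "first_present \<sigma> Fc"
    have h: "?h \<in># Fc" using first_present_mem[OF inl] by simp
    have hT: "?h \<le> T" using h Suc.prems by auto
    have ch: "choice (index_policy \<sigma>) F0 hist Fc = ?h"
      using h by (simp add: choice_def index_policy_def first_present_def)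
    have sub: "set_mset (Fc - {#?h#} + added ob) \<subseteq> {..T}" if "ob \<in> set_pmf (out ?h)" for ob
      using set_mset_after_query[of Fc "Suc T" ?h ob] Suc.prems h that by (auto simp: lessThan_Suc_atMost)
    have "val_steps T D pT \<alpha> \<beta> (index_policy \<sigma>) (Suc n) F0 hist Fc
       = (\<integral>\<^sup>+ob. benefit \<beta> ?h (length hist) ob + ennreal (disc ^ Suc (length hist)) * run_steps \<sigma> 1 (\<lambda>_. 0) n (Fc - {#?h#} + added ob) \<partial>out ?h)"
      using False ch
    proof (simp add: Let_def, intro nn_integral_cong_AE AE_pmfI)
      fix ob assume "ob \<in> set_pmf (out ?h)"
      from Suc.IH[OF sub[OF this], of "hist @ [(?h, ob)]"]
      show "benefit \<beta> ?h (length hist) ob + val_steps T D pT \<alpha> \<beta> (index_policy \<sigma>) n F0 (hist @ [(?h, ob)]) (Fc - {#?h#} + added ob) =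
         benefit \<beta> ?h (length hist) ob + ennreal (disc * disc ^ length hist) * run_steps \<sigma> 1 (\<lambda>_. 0) n (Fc - {#?h#} + added ob)"
        by simp
    qed
    also have "\<dots> = ennreal (disc ^ length hist) * ennreal (reward ?h) + ennreal (disc ^ Suc (length hist)) * (\<integral>\<^sup>+ob. run_steps \<sigma> 1 (\<lambda>_. 0) n (Fc - {#?h#} + added ob) \<partial>out ?h)"
      by (simp add: nn_integral_add nn_integral_cmult nn_integral_benefit[OF hT])
    also have "\<dots> = ennreal (disc ^ length hist) * run_steps \<sigma> 1 (\<lambda>_. 0) (Suc n) Fc"
      using inl disc_pos by (simp add: distrib_left ennreal_mult mult_ac)
    finally show ?thesis .
  qed
qed

lemma total_value_index_policy:
  assumes "set \<sigma> = {0..T}" "set_mset F0 \<subseteq> {..T}"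
  shows "total_value T D pT \<alpha> \<beta> (index_policy \<sigma>) F0 = index_value \<sigma> F0"
  unfolding total_value_def run_def using val_steps_index_policy[OF assms(1) assms(2)] by simp

lemma val_steps_le_superharmonic:
  assumes superharmonic: "\<And>F h. set_mset F \<subseteq> {..T} \<Longrightarrow> h \<in># F \<Longrightarrow>
      ennreal (reward h) + ennreal disc * (\<integral>\<^sup>+ob. W (F - {#h#} + added ob) \<partial>out h) \<le> W F"
  shows "set_mset Fc \<subseteq> {..T} \<Longrightarrow>
    val_steps T D pT \<alpha> \<beta> \<pi> n F0 hist Fc \<le> ennreal (disc ^ length hist) * W Fc"
proof (induction n arbitrary: hist Fc)
  case 0 then show ?case by simp
next
  case (Suc n)
  show ?case
  proof (cases "Fc = {#}")
    case True then show ?thesis by simp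
  next
    case False
    let ?h = "choice \<pi> F0 hist Fc"
    have h: "?h \<in># Fc" using choice_mem[OF False] .
    have hT: "?h \<le> T" using h Suc.prems by auto
    have sub: "set_mset (Fc - {#?h#} + added ob) \<subseteq> {..T}" if "ob \<in> set_pmf (out ?h)" for ob
      using set_mset_after_query[of Fc "Suc T" ?h ob] Suc.prems h that by (auto simp: lessThan_Suc_atMost)
    have "val_steps T D pT \<alpha> \<beta> \<pi> (Suc n) F0 hist Fc
       \<le> (\<integral>\<^sup>+ob. benefit \<beta> ?h (length hist) ob + ennreal (disc ^ Suc (length hist)) * W (Fc - {#?h#} + added ob) \<partial>out ?h)"
      using False
    proof (simp add: Let_def, intro nn_integral_mono_AE AE_pmfI add_left_mono)
      fix ob assume "ob \<in> set_pmf (out ?h)"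
      from Suc.IH[OF sub[OF this], of "hist @ [(?h, ob)]"]
      show "val_steps T D pT \<alpha> \<beta> \<pi> n F0 (hist @ [(?h, ob)]) (Fc - {#?h#} + added ob) \<le>
         ennreal (disc * disc ^ length hist) * W (Fc - {#?h#} + added ob)"
        by simp
    qed
    also have "\<dots> = ennreal (disc ^ length hist) * (ennreal (reward ?h) + ennreal disc * (\<integral>\<^sup>+ob. W (Fc - {#?h#} + added ob) \<partial>out ?h))"
      using disc_pos by (simp add: nn_integral_add nn_integral_cmult nn_integral_benefit[OF hT] distrib_left ennreal_mult mult_ac)
    also have "\<dots> \<le> ennreal (disc ^ length hist) * W Fc"
      by (intro mult_left_mono superharmonic Suc.prems h) simp
    finally show ?thesis .
  qed
qed

lemma optimal_if_superharmonic:
  assumes sig: "set \<sigma> = {0..T}"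
  and superharmonic: "\<And>F h. set_mset F \<subseteq> {..T} \<Longrightarrow> h \<in># F \<Longrightarrow>
      ennreal (reward h) + ennreal disc * (\<integral>\<^sup>+ob. index_value \<sigma> (F - {#h#} + added ob) \<partial>out h) \<le> index_value \<sigma> F"
  shows "optimal_policy T D pT \<alpha> \<beta> (index_policy \<sigma>)"
  unfolding optimal_policy_def
proof (intro allI impI)
  fix F0 :: "nat multiset" and \<pi>' assume F0: "set_mset F0 \<subseteq> {..T}"
  have "total_value T D pT \<alpha> \<beta> \<pi>' F0 \<le> index_value \<sigma> F0"
    unfolding total_value_def
    using val_steps_le_superharmonic[of "index_value \<sigma>", OF superharmonic F0, of \<pi>' _ F0 "[]"]
    by (intro SUP_least) simp
  then show "total_value T D pT \<alpha> \<beta> \<pi>' F0 \<le> total_value T D pT \<alpha> \<beta> (index_policy \<sigma>) F0"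
    using total_value_index_policy[OF sig F0] by simp
qed

section \<open>Excursions and the interchange argument\<close>

text \<open>Other nodes of a frontier without recencies in \<open>L\<close> do not interfere
  (\<open>run_plus_absent\<close>). \<open>excursion_tail\<close> omits the rewards; \<open>excursion_reward\<close> and
  \<open>excursion_discount\<close> are the \<open>r(x)\<close> and \<open>q(x)\<close> of the interchange argument.\<close>
definition excursion :: "nat list \<Rightarrow> nat \<Rightarrow> (nat multiset \<Rightarrow> ennreal) \<Rightarrow> ennreal" where
  "excursion L x f = ennreal (reward x) + ennreal disc * (\<integral>\<^sup>+ob. run L 1 f (added ob) \<partial>out x)"

definition excursion_tail :: "nat list \<Rightarrow> nat \<Rightarrow> (nat multiset \<Rightarrow> ennreal) \<Rightarrow> ennreal" where
  "excursion_tail L x f = ennreal disc * (\<integral>\<^sup>+ob. run L 0 f (added ob) \<partial>out x)"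

definition excursion_reward :: "nat list \<Rightarrow> nat \<Rightarrow> ennreal" where
  "excursion_reward L x = ennreal (reward x) + ennreal disc * (\<integral>\<^sup>+ob. run L 1 (\<lambda>_. 0) (added ob) \<partial>out x)"

definition excursion_discount :: "nat list \<Rightarrow> nat \<Rightarrow> ennreal" where
  "excursion_discount L x = excursion_tail L x (\<lambda>_. 1)"

lemma excursion_split: "excursion L x f = excursion_reward L x + excursion_tail L x f"
proof -
  have "run L 1 f A = run L 1 (\<lambda>_. 0) A + run L 0 f A" for A
    using run_add[of 1 0 L "\<lambda>_. 0" A f] by simp
  then show ?thesis
    by (simp add: excursion_def excursion_reward_def excursion_tail_def nn_integral_add distrib_left add.assoc)
qed

lemma excursion_tail_affine: "excursion_tail L x (\<lambda>C. c + g C) = c * excursion_discount L x + excursion_tail L x g"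
proof -
  have "run L 0 (\<lambda>C. c + g C) A = c * run L 0 (\<lambda>_. 1) A + run L 0 g A" for A
    using run_add[of 0 0 L "\<lambda>_. c" A g] run_scale[of L c "\<lambda>_. 1" A] by simp
  then show ?thesis
    by (simp add: excursion_discount_def excursion_tail_def nn_integral_add nn_integral_cmult distrib_left mult_ac)
qed

lemma excursion_tail_twice:
  "excursion_tail L x (\<lambda>C. excursion_tail L y (\<lambda>C'. G (C + C'))) =
     ennreal disc * ennreal disc * (\<integral>\<^sup>+ob. \<integral>\<^sup>+ob'. run L 0 G (added ob + added ob') \<partial>out y \<partial>out x)"
proof -
  have inner: "run L 0 (\<lambda>C. excursion_tail L y (\<lambda>C'. G (C + C'))) A =
      ennreal disc * (\<integral>\<^sup>+ob'. run L 0 G (A + added ob') \<partial>out y)" for A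
  proof -
    have "run L 0 (\<lambda>C. excursion_tail L y (\<lambda>C'. G (C + C'))) A =
        run L 0 (\<lambda>C. ennreal disc * (\<integral>\<^sup>+ob'. run L 0 G (C + added ob') \<partial>out y)) A"
    proof (rule run_cong)
      fix C assume "\<not> present L C"
      then show "excursion_tail L y (\<lambda>C'. G (C + C')) = ennreal disc * (\<integral>\<^sup>+ob'. run L 0 G (C + added ob') \<partial>out y)"
        by (simp add: excursion_tail_def run_plus_absent[of L C 0 G, symmetric])
    qed
    also have "\<dots> = ennreal disc * (\<integral>\<^sup>+ob'. run L 0 (\<lambda>C. run L 0 G (C + added ob')) A \<partial>out y)"
      by (simp only: run_scale run_nn_integral)
    also have "\<dots> = ennreal disc * (\<integral>\<^sup>+ob'. run L 0 G (A + added ob') \<partial>out y)"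
      by (simp only: run_plus[of L G A "added ob'" for ob', symmetric])
    finally show ?thesis .
  qed
  have "excursion_tail L x (\<lambda>C. excursion_tail L y (\<lambda>C'. G (C + C'))) = ennreal disc * (\<integral>\<^sup>+ob. run L 0 (\<lambda>C. excursion_tail L y (\<lambda>C'. G (C + C'))) (added ob) \<partial>out x)"
    by (rule excursion_tail_def)
  also have "\<dots> = ennreal disc * (\<integral>\<^sup>+ob. ennreal disc * (\<integral>\<^sup>+ob'. run L 0 G (added ob + added ob') \<partial>out y) \<partial>out x)"
    by (simp only: inner)
  finally show ?thesis by (simp add: nn_integral_cmult mult_ac)
qed

lemma excursion_tail_commute:
  "excursion_tail L x (\<lambda>C. excursion_tail L y (\<lambda>C'. G (C + C'))) = excursion_tail L y (\<lambda>C. excursion_tail L x (\<lambda>C'. G (C + C')))"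
  unfolding excursion_tail_twice by (subst nn_integral_pmf_commute) (simp add: add.commute)


lemma excursion_mono_below:
  assumes "\<And>C. \<not> present L C \<Longrightarrow> set_mset C \<subseteq> {..<x} \<Longrightarrow> f C \<le> g C"
  shows "excursion L x f \<le> excursion L x g"
  unfolding excursion_def
  by (intro add_left_mono mult_left_mono nn_integral_mono_AE AE_pmfI run_mono_below[of L x f g] assms set_added_outcome) auto

lemma excursion_cong_below:
  assumes "\<And>C. \<not> present L C \<Longrightarrow> set_mset C \<subseteq> {..<x} \<Longrightarrow> f C = g C"
  shows "excursion L x f = excursion L x g"
  by (rule antisym; rule excursion_mono_below) (use assms in auto)

lemma excursion_excursion:
  "excursion L x (\<lambda>C. excursion L y (\<lambda>C'. G (C + C'))) = excursion_reward L x + (excursion_reward L y * excursion_discount L x + excursion_tail L x (\<lambda>C. excursion_tail L y (\<lambda>C'. G (C + C'))))"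
proof -
  have "excursion L x (\<lambda>C. excursion L y (\<lambda>C'. G (C + C'))) = excursion_reward L x + excursion_tail L x (\<lambda>C. excursion_reward L y + excursion_tail L y (\<lambda>C'. G (C + C')))"
    by (simp add: excursion_split)
  also have "\<dots> = excursion_reward L x + (excursion_reward L y * excursion_discount L x + excursion_tail L x (\<lambda>C. excursion_tail L y (\<lambda>C'. G (C + C'))))"
    by (simp add: excursion_tail_affine)
  finally show ?thesis .
qed

lemma excursion_swap:
  assumes "excursion_reward L h + excursion_reward L t * excursion_discount L h
      \<le> excursion_reward L t + excursion_reward L h * excursion_discount L t"
  shows "excursion L h (\<lambda>C. excursion L t (\<lambda>C'. G (C + C')))
      \<le> excursion L t (\<lambda>C. excursion L h (\<lambda>C'. G (C + C')))"
  unfolding excursion_excursion excursion_tail_commute[of L h] add.assoc[symmetric]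
  by (rule add_right_mono[OF assms])

lemma index_value_plus_absent:
  assumes "\<not> present (take j \<sigma>) B"
  shows "index_value \<sigma> (B + C) = run (take j \<sigma>) 1 (\<lambda>C'. index_value \<sigma> (B + C')) C"
proof -
  have "index_value \<sigma> (B + C) = run (take j \<sigma>) 1 (\<lambda>X. index_value \<sigma> X) (B + C)"
    using run_append[of "take j \<sigma>" "drop j \<sigma>" 1 "\<lambda>_. 0" "B + C"] unfolding append_take_drop_id .
  also have "\<dots> = run (take j \<sigma>) 1 (\<lambda>C'. index_value \<sigma> (B + C')) C"
    by (rule run_plus_absent[OF assms])
  finally show ?thesis .
qed

lemma index_value_unfold_nth:
  assumes "k < length \<sigma>" "\<not> present (take k \<sigma>) F" "\<sigma> ! k \<in># F"
  shows "index_value \<sigma> F = excursion (take k \<sigma>) (\<sigma> ! k) (\<lambda>C. index_value \<sigma> (F - {#\<sigma> ! k#} + C))"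
proof -
  let ?t = "\<sigma> ! k"
  have "index_value \<sigma> F = ennreal (reward ?t) + ennreal disc * (\<integral>\<^sup>+ob. index_value \<sigma> (F - {#?t#} + added ob) \<partial>out ?t)"
    using run_present[OF first_present_nth(1)[OF assms], of 1 "\<lambda>_. 0"] first_present_nth(2)[OF assms] by simp
  also have "\<dots> = excursion (take k \<sigma>) ?t (\<lambda>C. index_value \<sigma> (F - {#?t#} + C))"
  proof -
    have eq: "run (take k \<sigma>) 1 (\<lambda>C. index_value \<sigma> (F - {#?t#} + C)) A = index_value \<sigma> (F - {#?t#} + A)" for A
      using index_value_plus_absent[where j=k and B="F - {#?t#}" and \<sigma>=\<sigma> and C=A] not_present_diff[OF assms(2)] by metis
    show ?thesis unfolding excursion_def eq ..
  qed
  finally show ?thesis .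
qed

lemma excursion_take_Suc:
  assumes "k < length \<sigma>" "\<not> present (take (Suc k) \<sigma>) B"
  shows "excursion (take k \<sigma>) h (\<lambda>C. index_value \<sigma> (B + C)) = excursion (take (Suc k) \<sigma>) h (\<lambda>C. index_value \<sigma> (B + C))"
proof -
  have tk: "take (Suc k) \<sigma> = take k \<sigma> @ [\<sigma> ! k]" using assms(1) by (rule take_Suc_conv_app_nth)
  have "run (take k \<sigma>) 1 (\<lambda>C. index_value \<sigma> (B + C)) A = run (take (Suc k) \<sigma>) 1 (\<lambda>C. index_value \<sigma> (B + C)) A" for A
  proof -
    have "run (take k \<sigma>) 1 (\<lambda>C. index_value \<sigma> (B + C)) A
        = run (take k \<sigma>) 1 (\<lambda>C. run (take (Suc k) \<sigma>) 1 (\<lambda>C'. index_value \<sigma> (B + C')) C) A"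
      by (rule run_cong) (rule index_value_plus_absent[OF assms(2)])
    also have "\<dots> = run (take (Suc k) \<sigma>) 1 (\<lambda>C'. index_value \<sigma> (B + C')) A"
      unfolding tk by (rule run_append[symmetric])
    finally show ?thesis .
  qed
  then show ?thesis by (simp add: excursion_def)
qed

text \<open>Position \<open>k\<close> of \<open>\<sigma>\<close> has maximal index \<open>r/(1 - q)\<close> among the recencies not placed before
  it; the inequality is cross-multiplied to avoid division in \<open>ennreal\<close>.\<close>
definition maximal_index :: "nat list \<Rightarrow> nat \<Rightarrow> bool" where
  "maximal_index \<sigma> k \<longleftrightarrow> (\<forall>h. h \<le> T \<longrightarrow> h \<notin> set (take k \<sigma>) \<longrightarrow>
     excursion_reward (take k \<sigma>) h + excursion_reward (take k \<sigma>) (\<sigma> ! k) * excursion_discount (take k \<sigma>) h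
       \<le> excursion_reward (take k \<sigma>) (\<sigma> ! k) + excursion_reward (take k \<sigma>) h * excursion_discount (take k \<sigma>) (\<sigma> ! k))"

lemma excursion_le_index_value_swap:
  fixes \<sigma> :: "nat list" and k :: nat
  defines "L \<equiv> take k \<sigma>" and "t \<equiv> \<sigma> ! k"
  assumes k: "k < length \<sigma>" and max: "maximal_index \<sigma> k"
    and F: "set_mset F \<subseteq> {..T}" "\<not> present L F" "t \<in># F" and h: "h \<in># F" "h \<noteq> t"
    and less: "\<And>F' h'. count F' t < count F t \<Longrightarrow> set_mset F' \<subseteq> {..T} \<Longrightarrow> \<not> present L F' \<Longrightarrow>
      h' \<in># F' \<Longrightarrow> excursion L h' (\<lambda>C. index_value \<sigma> (F' - {#h'#} + C)) \<le> index_value \<sigma> F'"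
  shows "excursion L h (\<lambda>C. index_value \<sigma> (F - {#h#} + C)) \<le> index_value \<sigma> F"
proof -
  have "h \<in># F - {#t#}" using h by (simp add: in_diff_count)
  then obtain F' where F': "F = add_mset t (add_mset h F')" using F(3) by (metis insert_DiffM)
  define G where "G X = index_value \<sigma> (F' + X)" for X
  have unfold_t: "index_value \<sigma> A = excursion L t (\<lambda>C. index_value \<sigma> (A - {#t#} + C))"
    if "\<not> present L A" "t \<in># A" for A
    using index_value_unfold_nth[OF k] that by (simp add: L_def t_def)
  have "excursion L h (\<lambda>C. index_value \<sigma> (F - {#h#} + C))
      = excursion L h (\<lambda>C. excursion L t (\<lambda>C'. G (C + C')))"
  proof (rule excursion_cong_below)
    fix C assume "\<not> present L C"
    then have "\<not> present L (F - {#h#} + C)" using not_present_diff[OF F(2)] by (auto simp: present_def)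
    then show "index_value \<sigma> (F - {#h#} + C) = excursion L t (\<lambda>C'. G (C + C'))"
      by (subst unfold_t) (simp_all add: F' G_def add.assoc)
  qed
  also have "\<dots> \<le> excursion L t (\<lambda>C. excursion L h (\<lambda>C'. G (C + C')))"
  proof (rule excursion_swap)
    have "h \<le> T" "h \<notin> set L" using F h by (auto simp: present_def)
    then show "excursion_reward L h + excursion_reward L t * excursion_discount L h
        \<le> excursion_reward L t + excursion_reward L h * excursion_discount L t"
      using max unfolding maximal_index_def L_def t_def by blast
  qed
  also have "\<dots> \<le> excursion L t (\<lambda>C. index_value \<sigma> (F - {#t#} + C))"
  proof (rule excursion_mono_below)
    fix C assume C: "\<not> present L C" "set_mset C \<subseteq> {..<t}"
    \<comment> \<open>the children of \<open>t\<close> have smaller recency, so fewer copies of \<open>t\<close> remain\<close>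
    have "t \<le> T" using F(1,3) by auto
    have "count C t = 0" using C(2) by (auto simp: count_eq_zero_iff)
    then have "count (F - {#t#} + C) t < count F t" using F(3) by simp
    moreover have "set_mset (F - {#t#} + C) \<subseteq> {..T}" using F(1) C(2) \<open>t \<le> T\<close> by (auto dest: in_diffD)
    moreover have "\<not> present L (F - {#t#} + C)"
      using not_present_diff[OF F(2)] C(1) by (auto simp: present_def)
    moreover have "h \<in># F - {#t#} + C" by (simp add: F')
    ultimately have "excursion L h (\<lambda>C'. index_value \<sigma> (F - {#t#} + C - {#h#} + C'))
        \<le> index_value \<sigma> (F - {#t#} + C)"
      by (rule less)
    then show "excursion L h (\<lambda>C'. G (C + C')) \<le> index_value \<sigma> (F - {#t#} + C)"
      by (simp add: F' G_def add.assoc)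
  qed
  also have "\<dots> = index_value \<sigma> F"
    using unfold_t[OF F(2,3)] by simp
  finally show ?thesis .
qed

lemma excursion_le_index_value_step:
  assumes k: "k < length \<sigma>" and max: "maximal_index \<sigma> k"
    and next_stage: "\<And>F h. set_mset F \<subseteq> {..T} \<Longrightarrow> \<not> present (take (Suc k) \<sigma>) F \<Longrightarrow> h \<in># F \<Longrightarrow>
      excursion (take (Suc k) \<sigma>) h (\<lambda>C. index_value \<sigma> (F - {#h#} + C)) \<le> index_value \<sigma> F"
  shows "set_mset F \<subseteq> {..T} \<Longrightarrow> \<not> present (take k \<sigma>) F \<Longrightarrow> h \<in># F \<Longrightarrow>
    excursion (take k \<sigma>) h (\<lambda>C. index_value \<sigma> (F - {#h#} + C)) \<le> index_value \<sigma> F"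
proof (induction "count F (\<sigma> ! k)" arbitrary: F h rule: less_induct)
  case less
  consider "\<sigma> ! k \<notin># F" | "h = \<sigma> ! k" | "\<sigma> ! k \<in># F" "h \<noteq> \<sigma> ! k" by blast
  then show ?case
  proof cases
    case 1
    then have absent: "\<not> present (take (Suc k) \<sigma>) F"
      using less.prems(2) k by (auto simp: present_def take_Suc_conv_app_nth)
    have "excursion (take k \<sigma>) h (\<lambda>C. index_value \<sigma> (F - {#h#} + C))
        = excursion (take (Suc k) \<sigma>) h (\<lambda>C. index_value \<sigma> (F - {#h#} + C))"
      by (rule excursion_take_Suc[OF k not_present_diff[OF absent]])
    also have "\<dots> \<le> index_value \<sigma> F"
      by (rule next_stage[OF less.prems(1) absent less.prems(3)])
    finally show ?thesis .
  next
    case 2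
    then show ?thesis using index_value_unfold_nth[OF k less.prems(2)] less.prems(3) by simp
  next
    case 3
    show ?thesis
      by (rule excursion_le_index_value_swap[OF k max less.prems(1,2) 3(1) less.prems(3) 3(2) less.hyps])
  qed
qed

lemma excursion_le_index_value:
  assumes sig: "set \<sigma> = {0..T}" and max: "\<And>j. j < length \<sigma> \<Longrightarrow> maximal_index \<sigma> j"
  shows "k \<le> length \<sigma> \<Longrightarrow> set_mset F \<subseteq> {..T} \<Longrightarrow> \<not> present (take k \<sigma>) F \<Longrightarrow> h \<in># F \<Longrightarrow>
    excursion (take k \<sigma>) h (\<lambda>C. index_value \<sigma> (F - {#h#} + C)) \<le> index_value \<sigma> F"
proof (induction "length \<sigma> - k" arbitrary: k F h)
  case 0
  then show ?case using sig by (auto simp: present_def)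
next
  case (Suc m)
  then have k: "k < length \<sigma>" by simp
  have "excursion (take (Suc k) \<sigma>) h' (\<lambda>C. index_value \<sigma> (F' - {#h'#} + C)) \<le> index_value \<sigma> F'"
    if "set_mset F' \<subseteq> {..T}" "\<not> present (take (Suc k) \<sigma>) F'" "h' \<in># F'" for F' h'
    using Suc.hyps(1)[of "Suc k" F' h'] Suc.hyps(2) k that by simp
  then show ?case by (rule excursion_le_index_value_step[OF k max[OF k] _ Suc.prems(2-4)])
qed

lemma index_value_superharmonic:
  assumes sig: "set \<sigma> = {0..T}" and rc: "\<And>j. j < length \<sigma> \<Longrightarrow> maximal_index \<sigma> j"
  and F: "set_mset F \<subseteq> {..T}" and h: "h \<in># F"
  shows "ennreal (reward h) + ennreal disc * (\<integral>\<^sup>+ob. index_value \<sigma> (F - {#h#} + added ob) \<partial>out h) \<le> index_value \<sigma> F"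
proof -
  have "excursion (take 0 \<sigma>) h (\<lambda>C. index_value \<sigma> (F - {#h#} + C)) \<le> index_value \<sigma> F"
    by (rule excursion_le_index_value[OF sig rc]) (use F h in \<open>auto simp: present_def\<close>)
  moreover have "run [] 1 f A = f A" for f A by (rule run_absent) (simp add: present_def)
  ultimately show ?thesis by (simp add: excursion_def)
qed

section \<open>Excursions of interval prefixes\<close>

definition offspring_reward :: "nat list \<Rightarrow> nat \<Rightarrow> real" where
  "offspring_reward L lo = enn2real (\<integral>\<^sup>+N. run L 1 (\<lambda>_. 0) N \<partial>children_pmf D lo)"

definition offspring_discount :: "nat list \<Rightarrow> nat \<Rightarrow> real" where
  "offspring_discount L lo = enn2real (\<integral>\<^sup>+N. run L 0 (\<lambda>_. 1) N \<partial>children_pmf D lo)"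

text \<open>For \<open>set L = {..<lo} \<union> {hi<..T}\<close> and \<open>lo \<le> x \<le> hi\<close> this is the index \<open>r(x)/(1 - q(x))\<close>
  (\<open>excursion_reward_interval\<close>, \<open>excursion_discount_interval\<close>).\<close>
definition index_ratio :: "nat list \<Rightarrow> nat \<Rightarrow> nat \<Rightarrow> real" where
  "index_ratio L lo x = pinf x * (disc ^ x + disc * offspring_reward L lo) / (1 - disc + disc * pinf x * (1 - offspring_discount L lo))"

lemma run_children_filter_below:
  assumes L: "set L = {..<lo} \<union> {hi<..T}" and x: "x \<le> hi"
  and N: "N \<in> set_pmf (children_pmf D x)"
  shows "run L c (\<lambda>_. v) N = run L c (\<lambda>_. v) (filter_mset (\<lambda>y. y < lo) N)"
proof -
  let ?B = "filter_mset (\<lambda>y. \<not> y < lo) N"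
  have sub: "set_mset N \<subseteq> {..<x}" using set_children_pmf[OF N] .
  have nB: "\<not> present L ?B" using sub L x by (auto simp: present_def)
  have part: "?B + filter_mset (\<lambda>y. y < lo) N = N"
    using multiset_partition[of N "\<lambda>y. y < lo"] by (simp add: add.commute)
  have "run L c (\<lambda>_. v) (?B + filter_mset (\<lambda>y. y < lo) N) = run L c (\<lambda>_. v) (filter_mset (\<lambda>y. y < lo) N)"
    by (rule run_plus_absent[OF nB])
  then show ?thesis unfolding part .
qed

lemma nn_integral_run_children:
  assumes L: "set L = {..<lo} \<union> {hi<..T}" and x: "lo \<le> x" "x \<le> hi"
  shows "(\<integral>\<^sup>+N. run L c (\<lambda>_. v) N \<partial>children_pmf D x) = (\<integral>\<^sup>+N. run L c (\<lambda>_. v) N \<partial>children_pmf D lo)"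
proof -
  have "(\<integral>\<^sup>+N. run L c (\<lambda>_. v) N \<partial>children_pmf D x)
      = (\<integral>\<^sup>+N. run L c (\<lambda>_. v) (filter_mset (\<lambda>y. y < lo) N) \<partial>children_pmf D x)"
    by (intro nn_integral_cong_AE AE_pmfI run_children_filter_below[OF L x(2)])
  also have "\<dots> = (\<integral>\<^sup>+N. run L c (\<lambda>_. v) N \<partial>map_pmf (filter_mset (\<lambda>y. y < lo)) (children_pmf D x))"
    by simp
  also have "\<dots> = (\<integral>\<^sup>+N. run L c (\<lambda>_. v) N \<partial>children_pmf D lo)"
    by (simp only: children_pmf_filter_below[OF x(1)])
  finally show ?thesis .
qed

lemma infect_prob_range: "x \<le> T \<Longrightarrow> 0 \<le> infect_prob T pT \<alpha> x \<and> infect_prob T pT \<alpha> x \<le> 1"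
  using pinf_pos[of x] pinf_le_1[of x] by (simp add: pinf_def)

lemma nn_integral_run_children_reward:
  assumes "set L \<subseteq> {..T}"
  shows "(\<integral>\<^sup>+N. run L 1 (\<lambda>_. 0) N \<partial>children_pmf D lo) = ennreal (offspring_reward L lo)"
proof -
  have "(\<integral>\<^sup>+N. run L 1 (\<lambda>_. 0) N \<partial>children_pmf D lo) \<le> (\<integral>\<^sup>+N. ennreal (1 / (1 - disc)) \<partial>children_pmf D lo)"
    by (intro nn_integral_mono run_le_geometric[OF assms])
  also have "\<dots> < \<top>" by simp
  finally show ?thesis by (simp add: offspring_reward_def)
qed

lemma nn_integral_run_children_discount:
  "(\<integral>\<^sup>+N. run L 0 (\<lambda>_. 1) N \<partial>children_pmf D lo) = ennreal (offspring_discount L lo)" and offspring_discount_le_1: "offspring_discount L lo \<le> 1"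
proof -
  have "(\<integral>\<^sup>+N. run L 0 (\<lambda>_. 1) N \<partial>children_pmf D lo) \<le> (\<integral>\<^sup>+N. ennreal 1 \<partial>children_pmf D lo)"
    by (intro nn_integral_mono run_le_const) auto
  also have "\<dots> = 1" by simp
  finally have le: "(\<integral>\<^sup>+N. run L 0 (\<lambda>_. 1) N \<partial>children_pmf D lo) \<le> 1" .
  then have "(\<integral>\<^sup>+N. run L 0 (\<lambda>_. 1) N \<partial>children_pmf D lo) < \<top>" by (simp add: le_less_trans)
  then show "(\<integral>\<^sup>+N. run L 0 (\<lambda>_. 1) N \<partial>children_pmf D lo) = ennreal (offspring_discount L lo)" by (simp add: offspring_discount_def)
  show "offspring_discount L lo \<le> 1" unfolding offspring_discount_def using le by (simp add: enn2real_leI)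
qed

lemma offspring_reward_nonneg: "0 \<le> offspring_reward L lo" and offspring_discount_nonneg: "0 \<le> offspring_discount L lo"
  by (simp_all add: offspring_reward_def offspring_discount_def)

lemma excursion_reward_interval:
  assumes L: "set L = {..<lo} \<union> {hi<..T}" and x: "lo \<le> x" "x \<le> hi" and hT: "hi \<le> T"
  shows "excursion_reward L x = ennreal (pinf x * (disc ^ x + disc * offspring_reward L lo))"
proof -
  have xT: "x \<le> T" using x hT by simp
  have LT: "set L \<subseteq> {..T}" using L x hT by auto
  have run_empty: "run L 1 (\<lambda>_. 0) {#} = 0" by (simp add: run_absent present_def)
  have "(\<integral>\<^sup>+ob. run L 1 (\<lambda>_. 0) (added ob) \<partial>out x)
      = ennreal (pinf x) * (\<integral>\<^sup>+N. run L 1 (\<lambda>_. 0) N \<partial>children_pmf D x)"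
    using infect_prob_range[OF xT] by (subst nn_integral_outcome_pmf) (auto simp: added_def run_empty pinf_def)
  also have "\<dots> = ennreal (pinf x) * ennreal (offspring_reward L lo)"
    using nn_integral_run_children[OF L x, of 1 0] nn_integral_run_children_reward[OF LT] by simp
  finally have children_part: "(\<integral>\<^sup>+ob. run L 1 (\<lambda>_. 0) (added ob) \<partial>out x) = ennreal (pinf x * offspring_reward L lo)"
    using pinf_pos[of x] offspring_reward_nonneg by (simp add: ennreal_mult)
  show ?thesis
    unfolding excursion_reward_def children_part using disc_pos pinf_pos[of x] offspring_reward_nonneg[of L lo]
    by (simp add: reward_def ennreal_mult[symmetric] ennreal_plus[symmetric] algebra_simps del: ennreal_plus)
qed

lemma excursion_discount_interval:
  assumes L: "set L = {..<lo} \<union> {hi<..T}" and x: "lo \<le> x" "x \<le> hi" and hT: "hi \<le> T"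
  shows "excursion_discount L x = ennreal (disc * (1 - pinf x) + disc * pinf x * offspring_discount L lo)"
proof -
  have xT: "x \<le> T" using x hT by simp
  have run_empty: "run L 0 (\<lambda>_. 1) {#} = 1" by (simp add: run_absent present_def)
  have p: "0 \<le> pinf x" "pinf x \<le> 1" using infect_prob_range[OF xT] by (auto simp: pinf_def)
  have "(\<integral>\<^sup>+ob. run L 0 (\<lambda>_. 1) (added ob) \<partial>out x)
      = ennreal (pinf x) * (\<integral>\<^sup>+N. run L 0 (\<lambda>_. 1) N \<partial>children_pmf D x) + ennreal (1 - pinf x)"
    using infect_prob_range[OF xT] by (subst nn_integral_outcome_pmf) (auto simp: added_def run_empty pinf_def)
  also have "\<dots> = ennreal (pinf x) * ennreal (offspring_discount L lo) + ennreal (1 - pinf x)"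
    using nn_integral_run_children[OF L x, of 0 1] nn_integral_run_children_discount by simp
  also have "\<dots> = ennreal (pinf x * offspring_discount L lo + (1 - pinf x))"
    using p offspring_discount_nonneg[of L lo] by (simp add: ennreal_mult ennreal_plus)
  finally have children_part: "(\<integral>\<^sup>+ob. run L 0 (\<lambda>_. 1) (added ob) \<partial>out x) = ennreal (pinf x * offspring_discount L lo + (1 - pinf x))" .
  have nn: "0 \<le> pinf x * offspring_discount L lo + (1 - pinf x)" using p offspring_discount_nonneg[of L lo] by simp
  have "ennreal disc * ennreal (pinf x * offspring_discount L lo + (1 - pinf x)) = ennreal (disc * (pinf x * offspring_discount L lo + (1 - pinf x)))"
    by (rule ennreal_mult[symmetric]) (use disc_pos nn in auto)
  also have "disc * (pinf x * offspring_discount L lo + (1 - pinf x)) = disc * (1 - pinf x) + disc * pinf x * offspring_discount L lo"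
    by (simp add: algebra_simps)
  finally show ?thesis unfolding excursion_discount_def excursion_tail_def children_part .
qed

lemma maximal_index_if_ratio_max:
  fixes \<sigma> :: "nat list" and k :: nat
  defines "L \<equiv> take k \<sigma>" and "t \<equiv> \<sigma> ! k"
  assumes L: "set L = {..<lo} \<union> {hi<..T}" and t: "lo \<le> t" "t \<le> hi" and hT: "hi \<le> T"
    and best: "\<And>h. lo \<le> h \<Longrightarrow> h \<le> hi \<Longrightarrow> index_ratio L lo h \<le> index_ratio L lo t"
  shows "maximal_index \<sigma> k"
  unfolding maximal_index_def L_def[symmetric] t_def[symmetric]
proof (intro allI impI)
  fix h assume h: "h \<le> T" "h \<notin> set L"
  then have hr: "lo \<le> h" "h \<le> hi" using L by auto
  define r where "r x = pinf x * (disc ^ x + disc * offspring_reward L lo)" for x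
  define q where "q x = disc * (1 - pinf x) + disc * pinf x * offspring_discount L lo" for x
  have r_nonneg: "0 \<le> r x" for x
    using pinf_pos[of x] disc_pos offspring_reward_nonneg[of L lo] by (simp add: r_def)
  have q_nonneg: "x \<le> T \<Longrightarrow> 0 \<le> q x" for x
    using pinf_pos[of x] pinf_le_1[of x] disc_pos offspring_discount_nonneg[of L lo] by (simp add: q_def)
  have one_minus_q: "1 - q x = 1 - disc + disc * pinf x * (1 - offspring_discount L lo)" for x
    by (simp add: q_def algebra_simps)
  have q_less_1: "0 < 1 - q x" for x
  proof -
    have "0 \<le> disc * pinf x * (1 - offspring_discount L lo)"
      using disc_pos pinf_pos[of x] offspring_discount_le_1[of L lo] by simp
    then show ?thesis using disc_less_1 one_minus_q[of x] by linarith
  qed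
  have "r h / (1 - q h) \<le> r t / (1 - q t)"
    using best[OF hr] by (simp add: index_ratio_def r_def one_minus_q)
  then have "r h * (1 - q t) \<le> r t * (1 - q h)"
    using q_less_1[of h] q_less_1[of t] by (simp add: field_simps)
  then have "r h + r t * q h \<le> r t + r h * q t" by (simp add: algebra_simps)
  moreover have "excursion_reward L x = ennreal (r x)" "excursion_discount L x = ennreal (q x)"
    if "lo \<le> x" "x \<le> hi" for x
    using excursion_reward_interval[OF L that hT] excursion_discount_interval[OF L that hT]
    by (simp_all add: r_def q_def)
  ultimately show "excursion_reward L h + excursion_reward L t * excursion_discount L h
      \<le> excursion_reward L t + excursion_reward L h * excursion_discount L t"
    using hr t r_nonneg q_nonneg[OF h(1)] q_nonneg[of t] hT
    by (simp add: ennreal_mult[symmetric] ennreal_plus[symmetric] del: ennreal_plus ennreal_mult)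
qed

section \<open>The greedy interleaved ordering\<close>

lemma pinf_exp: "pinf x = pT * exp (- \<alpha> * real T) * exp (\<alpha> * real x)"
  by (simp add: pinf_def infect_prob_def algebra_simps flip: exp_add)

lemma reward_exp: "reward x = pT * exp (- \<alpha> * real T) * exp ((\<alpha> - \<beta>) * real x)"
  by (simp add: reward_def pinf_exp disc_power algebra_simps flip: exp_add)

lemma reward_mono: "\<beta> \<le> \<alpha> \<Longrightarrow> x \<le> y \<Longrightarrow> reward x \<le> reward y"
  unfolding reward_exp using pT_pos by (simp add: mult_left_mono)

lemma reward_strict_mono: "\<beta> < \<alpha> \<Longrightarrow> x < y \<Longrightarrow> reward x < reward y"
  unfolding reward_exp using pT_pos by simp

lemma index_ratio_0: "index_ratio L 0 x = reward x / (1 - disc)"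
proof -
  have "offspring_reward L 0 = 0" "offspring_discount L 0 = 1"
    by (simp_all add: offspring_reward_def offspring_discount_def run_absent present_def)
  then show ?thesis by (simp add: index_ratio_def reward_def)
qed

lemma index_ratio_le_endpoints:
  assumes "\<alpha> \<le> \<beta> \<or> lo = 0" "lo \<le> h" "h \<le> hi"
  shows "index_ratio L lo h \<le> max (index_ratio L lo lo) (index_ratio L lo hi)"
proof (cases "\<alpha> \<le> \<beta>")
  case True
  define c where "c = pT * exp (- \<alpha> * real T)"
  have "index_ratio L lo x = c * exp (\<alpha> * real x) * (exp (- \<beta> * real x) + disc * offspring_reward L lo)
      / (1 - disc + disc * c * exp (\<alpha> * real x) * (1 - offspring_discount L lo))" for x
    by (simp add: index_ratio_def pinf_exp disc_power c_def mult.assoc)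
  moreover have "0 < c" using pT_pos by (simp add: c_def)
  ultimately show ?thesis
    using ratio_le_max_endpoints[of c \<alpha> \<beta> disc "offspring_discount L lo" "real lo" "real h" "real hi"]
      alpha_nonneg True disc_pos disc_less_1 offspring_discount_le_1 assms(2,3)
    by simp
next
  case False
  then have "lo = 0" using assms by simp
  moreover have "reward h \<le> reward hi" using False assms by (intro reward_mono) auto
  ultimately show ?thesis using disc_less_1 by (simp add: index_ratio_0 divide_right_mono le_max_iff_disj)
qed

text \<open>\<open>L\<close> is the prefix placed so far and \<open>[lo, hi]\<close>, of length \<open>n\<close>, the interval of recencies
  still to be placed.\<close>
primrec greedy_order :: "nat \<Rightarrow> nat list \<Rightarrow> nat \<Rightarrow> nat \<Rightarrow> nat list" where
  "greedy_order 0 L lo hi = L"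
| "greedy_order (Suc n) L lo hi =
     (if index_ratio L lo hi \<le> index_ratio L lo lo then greedy_order n (L @ [lo]) (Suc lo) hi
      else greedy_order n (L @ [hi]) lo (hi - 1))"

lemma greedy_order_prefix:
  "length (greedy_order n L lo hi) = length L + n \<and> take (length L) (greedy_order n L lo hi) = L"
proof (induction n arbitrary: L lo hi)
  case (Suc n)
  have "take (length L) (greedy_order n (L @ [x]) lo' hi') = L" for x lo' hi'
  proof -
    have "take (length L) (greedy_order n (L @ [x]) lo' hi')
        = take (length L) (take (length (L @ [x])) (greedy_order n (L @ [x]) lo' hi'))"
      by simp
    also have "\<dots> = L" using Suc[of "L @ [x]" lo' hi'] by simp
    finally show ?thesis .
  qed
  then show ?case using Suc by simp
qed simp

lemma greedy_order_nth:
  "greedy_order (Suc n) L lo hi ! length L = (if index_ratio L lo hi \<le> index_ratio L lo lo then lo else hi)"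
proof -
  have "greedy_order n (L @ [x]) lo' hi' ! length L = x" for x lo' hi'
  proof -
    have "take (Suc (length L)) (greedy_order n (L @ [x]) lo' hi') = L @ [x]"
      using greedy_order_prefix[of n "L @ [x]" lo' hi'] by simp
    then show ?thesis by (metis lessI nth_append_length nth_take)
  qed
  then show ?thesis by simp
qed

lemma greedy_picks_hi:
  "\<beta> < \<alpha> \<Longrightarrow> 0 < hi \<Longrightarrow> \<not> index_ratio L 0 hi \<le> index_ratio L 0 0"
  using reward_strict_mono[of 0 hi] disc_less_1 by (simp add: index_ratio_0 divide_le_cancel)

lemma greedy_order_perm:
  assumes "set L = {..<lo} \<union> {hi<..T}" "distinct L" "lo + n = Suc hi" "hi \<le> T"
  shows "set (greedy_order n L lo hi) = {0..T} \<and> distinct (greedy_order n L lo hi)"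
  using assms
proof (induction n arbitrary: L lo hi)
  case 0
  then have "set L = {0..T}" by (intro set_eqI) auto
  with 0 show ?case by simp
next
  case (Suc n)
  show ?case
  proof (cases "index_ratio L lo hi \<le> index_ratio L lo lo")
    case True
    have "set (L @ [lo]) = {..<Suc lo} \<union> {hi<..T}" "distinct (L @ [lo])"
      using set_snoc_lo[of L lo hi] Suc.prems by auto
    then show ?thesis using True Suc.IH[of "L @ [lo]" "Suc lo" hi] Suc.prems by simp
  next
    case False
    then have "lo < hi" using Suc.prems(3) by (cases "lo = hi") auto
    then have "set (L @ [hi]) = {..<lo} \<union> {hi - 1<..T}" "distinct (L @ [hi])"
      using set_snoc_hi[of L lo hi] Suc.prems by auto
    then show ?thesis using False Suc.IH[of "L @ [hi]" lo "hi - 1"] Suc.prems \<open>lo < hi\<close> by simp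
  qed
qed

lemma greedy_order_first_maximal_interleaved:
  fixes L :: "nat list" and n lo hi :: nat
  defines "\<sigma> \<equiv> greedy_order (Suc n) L lo hi" and "k \<equiv> length L"
  assumes L: "set L = {..<lo} \<union> {hi<..T}" "distinct L" and n: "lo + Suc n = Suc hi" and "hi \<le> T"
    and endpoints: "\<alpha> \<le> \<beta> \<or> lo = 0"
  shows "maximal_index \<sigma> k \<and> (\<sigma> ! k = Max (set (drop k \<sigma>)) \<or> \<sigma> ! k = Min (set (drop k \<sigma>)))"
proof -
  define t where "t = (if index_ratio L lo hi \<le> index_ratio L lo lo then lo else hi)"
  have nth: "\<sigma> ! k = t"
    unfolding \<sigma>_def k_def t_def by (rule greedy_order_nth)
  have take_k: "take k \<sigma> = L"
    using greedy_order_prefix[of "Suc n" L lo hi] by (simp add: \<sigma>_def k_def)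
  have lo_hi: "lo \<le> hi" using n by simp
  have "maximal_index \<sigma> k"
  proof (rule maximal_index_if_ratio_max)
    show "set (take k \<sigma>) = {..<lo} \<union> {hi<..T}" using take_k L(1) by simp
    show "lo \<le> \<sigma> ! k" "\<sigma> ! k \<le> hi" using lo_hi by (simp_all add: nth t_def)
    show "hi \<le> T" by fact
    fix h assume "lo \<le> h" "h \<le> hi"
    then have "index_ratio L lo h \<le> max (index_ratio L lo lo) (index_ratio L lo hi)"
      by (rule index_ratio_le_endpoints[OF endpoints])
    also have "\<dots> = index_ratio L lo t" by (simp add: t_def max_def)
    finally show "index_ratio (take k \<sigma>) lo h \<le> index_ratio (take k \<sigma>) lo (\<sigma> ! k)"
      by (simp add: take_k nth)
  qed
  moreover have "set (drop k \<sigma>) = {lo..hi}"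
  proof -
    have perm: "set \<sigma> = {0..T}" "distinct \<sigma>"
      using greedy_order_perm[OF L n \<open>hi \<le> T\<close>] by (simp_all add: \<sigma>_def)
    have "set \<sigma> = set L \<union> set (drop k \<sigma>)" by (metis append_take_drop_id set_append take_k)
    moreover have "set L \<inter> set (drop k \<sigma>) = {}"
      using set_take_disj_set_drop_if_distinct[OF perm(2), of k k] by (simp add: take_k)
    ultimately have "set (drop k \<sigma>) = {0..T} - set L" using perm(1) by blast
    also have "\<dots> = {lo..hi}" using L(1) \<open>hi \<le> T\<close> by (intro set_eqI) auto
    finally show ?thesis .
  qed
  moreover have "Max {lo..hi} = hi" "Min {lo..hi} = lo"
    using lo_hi by (auto intro: Max_eqI Min_eqI)
  ultimately show ?thesis by (simp add: nth t_def)
qed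

lemma greedy_order_maximal_interleaved:
  assumes "set L = {..<lo} \<union> {hi<..T}" "distinct L" "lo + n = Suc hi" "hi \<le> T"
    and "\<beta> < \<alpha> \<longrightarrow> lo = 0 \<or> n = 0"
  shows "length L \<le> j \<Longrightarrow> j < length (greedy_order n L lo hi) \<Longrightarrow>
    maximal_index (greedy_order n L lo hi) j \<and>
    (greedy_order n L lo hi ! j = Max (set (drop j (greedy_order n L lo hi))) \<or>
     greedy_order n L lo hi ! j = Min (set (drop j (greedy_order n L lo hi))))"
  using assms
proof (induction n arbitrary: L lo hi)
  case 0
  then show ?case using greedy_order_prefix[of 0 L lo hi] by simp
next
  case (Suc n)
  note L = Suc.prems(3,4) and n = Suc.prems(5) and hT = Suc.prems(6)
  show ?case
  proof (cases "j = length L")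
    case True
    have "\<alpha> \<le> \<beta> \<or> lo = 0" using Suc.prems(7) by auto
    with greedy_order_first_maximal_interleaved[OF L n hT] True show ?thesis by simp
  next
    case False
    then have j: "length (L @ [x]) \<le> j" for x using Suc.prems(1) by simp
    have len: "j < length (greedy_order n (L @ [x]) lo' hi')" for x lo' hi'
      using Suc.prems(2) greedy_order_prefix[of n "L @ [x]" lo' hi'] greedy_order_prefix[of "Suc n" L lo hi]
      by simp
    show ?thesis
    proof (cases "index_ratio L lo hi \<le> index_ratio L lo lo")
      case True
      \<comment> \<open>if \<open>\<beta> < \<alpha>\<close>, the upper endpoint is preferred as long as \<open>lo < hi\<close>\<close>
      have "\<beta> < \<alpha> \<longrightarrow> Suc lo = 0 \<or> n = 0"
        using Suc.prems(7) n True greedy_picks_hi[of hi L] by auto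
      moreover have "set (L @ [lo]) = {..<Suc lo} \<union> {hi<..T}" "distinct (L @ [lo])"
        using set_snoc_lo[of L lo hi] L n by auto
      ultimately show ?thesis
        using True Suc.IH[of "L @ [lo]" "Suc lo" hi, OF j len] n hT by simp
    next
      case False
      then have "lo < hi" using n by (cases "lo = hi") auto
      then have "set (L @ [hi]) = {..<lo} \<union> {hi - 1<..T}" "distinct (L @ [hi])"
        using set_snoc_hi[of L lo hi] L hT by auto
      then show ?thesis
        using False Suc.IH[of "L @ [hi]" lo "hi - 1", OF j len] n hT Suc.prems(7) \<open>lo < hi\<close> by simp
    qed
  qed
qed

end

theorem theorem6p2:
  fixes T :: nat and D :: "nat pmf" and pT \<alpha> \<beta> :: real
  assumes "0 < pT" and "pT \<le> 1" and "0 \<le> \<alpha>" and "0 < \<beta>"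
  shows "\<exists>\<sigma>. priority_ordering T \<sigma> \<and> interleaved T \<sigma> \<and>
           optimal_policy T D pT \<alpha> \<beta> (index_policy \<sigma>)"
proof -
  interpret contact_tracing T D pT \<alpha> \<beta> by unfold_locales (use assms in auto)
  define \<sigma> where "\<sigma> = greedy_order (Suc T) [] 0 T"
  have start: "set [] = {..<0} \<union> {T<..T}" by simp
  have perm: "set \<sigma> = {0..T}" "distinct \<sigma>"
    using greedy_order_perm[OF start] by (simp_all add: \<sigma>_def)
  have len: "length \<sigma> = Suc T"
    using greedy_order_prefix[of "Suc T" "[]" 0 T] by (simp add: \<sigma>_def)
  have good: "maximal_index \<sigma> j \<and> (\<sigma> ! j = Max (set (drop j \<sigma>)) \<or> \<sigma> ! j = Min (set (drop j \<sigma>)))"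
    if "j < length \<sigma>" for j
    using greedy_order_maximal_interleaved[OF start, of "Suc T" j] that by (simp add: \<sigma>_def)
  have "optimal_policy T D pT \<alpha> \<beta> (index_policy \<sigma>)"
    using optimal_if_superharmonic[OF perm(1) index_value_superharmonic[OF perm(1)]] good by blast
  moreover have "priority_ordering T \<sigma>" "interleaved T \<sigma>"
    using perm good len by (auto simp: priority_ordering_def interleaved_def)
  ultimately show ?thesis by blast
qed

end
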